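(* Let $K$ be a field of characteristic zero and $V$ a $K$-vector space of finite or countably infinite dimension. Let $m$ be a commutative product on $T(V)$ such that $(T(V),m,\eta,\Delta,\varepsilon)$ is a bialgebra (hence a Hopf algebra, with antipode $S$). Then $(T(V),m,\eta,\Delta,\varepsilon,S)$ and $(T(V),*,1,\Delta,\varepsilon,S_* )$ are isomorphic Hopf algebras.
   Context: $T(V)=\bigoplus_{n\ge0}V^{\otimes n}$, with $v_1\top\cdots\top v_n$ denoting $v_1\otimes\cdots\otimes v_n$ and $1$ the generator of $V^{\otimes0}=K$, is the tensor coalgebra: $\Delta(v_1\top\cdots\top v_n)=\sum_{k=0}^n(v_1\top\cdots\top v_k)\otimes(v_{k+1}\top\cdots\top v_n)$, $\varepsilon(1)=1$, $\varepsilon(V^{\otimes n})=0$ for $n\ge1$. The shuffle product $*$ is defined by $(v_1\top\cdots\top v_p)*(v_{p+1}\top\cdots\top v_{p+q})=\sum w$, the sum running over all words $w=v_{i_1}\top\cdots\top v_{i_{p+q}}$ obtained by interleaving $v_1,\dots,v_p$ and $v_{p+1},\dots,v_{p+q}$ while preserving the relative order within each of the two words (there are $\binom{p+q}{p}$ terms), with unit $1$. $(T(V),*,1,\Delta,\varepsilon)$ is a commutative Hopf algebra with antipode $S_*(v_1\top\cdots\top v_n)=(-1)^nv_n\top\cdots\top v_1$. *)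

theory Defs
  imports "HOL-Library.Poly_Mapping" "HOL-Library.Countable_Set"
begin

text \<open>
  Model: the K-vector space V has a basis indexed by a countable set I (any vector
  space of finite or countably infinite dimension is of this form up to isomorphism).
  Then T(V) is the free K-module on the words over I, i.e. finitely supported
  functions from words (lists) to K; a word  i1 ... in  stands for the
  tensor  e_i1 T ... T e_in, and the empty word for the unit 1 of V^0 = K.
  T(V) (x) T(V) is the free K-module on pairs of words.
\<close>

type_synonym ('i, 'k) tens = "'i list \<Rightarrow>\<^sub>0 'k"
type_synonym ('i, 'k) tens2 = "('i list \<times> 'i list) \<Rightarrow>\<^sub>0 'k"

definition TV :: "'i set \<Rightarrow> ('i, 'k::field) tens set" where
  "TV I = {x. Poly_Mapping.keys x \<subseteq> lists I}"

definition smult :: "'k::field \<Rightarrow> ('a \<Rightarrow>\<^sub>0 'k) \<Rightarrow> ('a \<Rightarrow>\<^sub>0 'k)" where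
  "smult c x = Poly_Mapping.map (\<lambda>a. c * a) x"

definition word :: "'i list \<Rightarrow> ('i, 'k::field) tens" where
  "word w = Poly_Mapping.single w 1"

definition lin_on :: "'i set \<Rightarrow> (('i, 'k::field) tens \<Rightarrow> ('i, 'k) tens) \<Rightarrow> bool" where
  "lin_on I f \<longleftrightarrow> (\<forall>x\<in>TV I. f x \<in> TV I) \<and>
     (\<forall>x\<in>TV I. \<forall>y\<in>TV I. f (x + y) = f x + f y) \<and>
     (\<forall>c. \<forall>x\<in>TV I. f (smult c x) = smult c (f x))"

definition bilin_on :: "'i set \<Rightarrow> (('i, 'k::field) tens \<Rightarrow> ('i, 'k) tens \<Rightarrow> ('i, 'k) tens) \<Rightarrow> bool" where
  "bilin_on I m \<longleftrightarrow> (\<forall>x\<in>TV I. \<forall>y\<in>TV I. m x y \<in> TV I) \<and>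
     (\<forall>x\<in>TV I. \<forall>y\<in>TV I. \<forall>z\<in>TV I. m (x + y) z = m x z + m y z) \<and>
     (\<forall>x\<in>TV I. \<forall>y\<in>TV I. \<forall>z\<in>TV I. m x (y + z) = m x y + m x z) \<and>
     (\<forall>c. \<forall>x\<in>TV I. \<forall>y\<in>TV I. m (smult c x) y = smult c (m x y)) \<and>
     (\<forall>c. \<forall>x\<in>TV I. \<forall>y\<in>TV I. m x (smult c y) = smult c (m x y))"

definition tensor :: "('i, 'k::field) tens \<Rightarrow> ('i, 'k) tens \<Rightarrow> ('i, 'k) tens2" where
  "tensor x y = (\<Sum>p\<in>Poly_Mapping.keys x. \<Sum>q\<in>Poly_Mapping.keys y.
      Poly_Mapping.single (p, q) (Poly_Mapping.lookup x p * Poly_Mapping.lookup y q))"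

definition Delta :: "('i, 'k::field) tens \<Rightarrow> ('i, 'k) tens2" where
  "Delta x = (\<Sum>w\<in>Poly_Mapping.keys x. \<Sum>k\<le>length w.
      Poly_Mapping.single (take k w, drop k w) (Poly_Mapping.lookup x w))"

definition eps :: "('i, 'k::field) tens \<Rightarrow> 'k" where
  "eps x = Poly_Mapping.lookup x []"

definition tmap :: "(('i, 'k::field) tens \<Rightarrow> ('i, 'k) tens) \<Rightarrow> (('i, 'k) tens \<Rightarrow> ('i, 'k) tens)
    \<Rightarrow> ('i, 'k) tens2 \<Rightarrow> ('i, 'k) tens2" where
  "tmap f g X = (\<Sum>(p, q)\<in>Poly_Mapping.keys X.
      smult (Poly_Mapping.lookup X (p, q)) (tensor (f (word p)) (g (word q))))"

definition mult_ext :: "(('i, 'k::field) tens \<Rightarrow> ('i, 'k) tens \<Rightarrow> ('i, 'k) tens)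
    \<Rightarrow> ('i, 'k) tens2 \<Rightarrow> ('i, 'k) tens" where
  "mult_ext m X = (\<Sum>(p, q)\<in>Poly_Mapping.keys X.
      smult (Poly_Mapping.lookup X (p, q)) (m (word p) (word q)))"

definition mult2 :: "(('i, 'k::field) tens \<Rightarrow> ('i, 'k) tens \<Rightarrow> ('i, 'k) tens)
    \<Rightarrow> ('i, 'k) tens2 \<Rightarrow> ('i, 'k) tens2 \<Rightarrow> ('i, 'k) tens2" where
  "mult2 m X Y = (\<Sum>(p, q)\<in>Poly_Mapping.keys X. \<Sum>(r, s)\<in>Poly_Mapping.keys Y.
      smult (Poly_Mapping.lookup X (p, q) * Poly_Mapping.lookup Y (r, s))
        (tensor (m (word p) (word r)) (m (word q) (word s))))"

text \<open>All interleavings of two words, listed with multiplicity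
  (binomial(p+q,p) entries).\<close>
fun shuffle_list :: "'a list \<Rightarrow> 'a list \<Rightarrow> 'a list list" where
  "shuffle_list [] ys = [ys]"
| "shuffle_list xs [] = [xs]"
| "shuffle_list (x # xs) (y # ys) =
     map (\<lambda>w. x # w) (shuffle_list xs (y # ys)) @ map (\<lambda>w. y # w) (shuffle_list (x # xs) ys)"

definition shuffle_word :: "'i list \<Rightarrow> 'i list \<Rightarrow> ('i, 'k::field) tens" where
  "shuffle_word xs ys = (\<Sum>w\<leftarrow>shuffle_list xs ys. word w)"

definition shuffle :: "('i, 'k::field) tens \<Rightarrow> ('i, 'k) tens \<Rightarrow> ('i, 'k) tens" where
  "shuffle x y = (\<Sum>p\<in>Poly_Mapping.keys x. \<Sum>q\<in>Poly_Mapping.keys y.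
      smult (Poly_Mapping.lookup x p * Poly_Mapping.lookup y q) (shuffle_word p q))"

definition shuffle_antipode :: "('i, 'k::field) tens \<Rightarrow> ('i, 'k) tens" where
  "shuffle_antipode x = (\<Sum>w\<in>Poly_Mapping.keys x.
      smult ((-1) ^ length w * Poly_Mapping.lookup x w) (word (rev w)))"

end

(* The convolution powers id^[k] of the identity (Adams operations) are algebra endomorphisms
   of the commutative bialgebra (T(V), m, Delta), and they are polynomial in k:
   id^[k] = sum_j (k choose j) (id - eta eps)^[j].  The coefficient of k in this polynomial is
   the Eulerian idempotent e = log id (this needs characteristic zero).  Comparing coefficients
   of k in id^[k](x y) = id^[k](x) id^[k](y) shows that e kills products of two elements of the
   augmentation ideal, so the projection pi of e onto V satisfies
   pi(x y) = pi(x) eps(y) + eps(x) pi(y).  Hence the coalgebra map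
   phi = sum_n pi^(tensor n) o Delta^(n) into the cofree coalgebra T(V) is multiplicative for
   the shuffle product; as pi is the identity on V, phi is unitriangular with respect to the
   length of words, hence bijective.  It carries S to S_* because antipodes are the unique
   convolution inverses of the identity. *)

theory Submission
  imports Defs "HOL-Computational_Algebra.Polynomial"
begin

hide_const (open) Polynomial.smult

abbreviation lookup :: "('a \<Rightarrow>\<^sub>0 'b::zero) \<Rightarrow> 'a \<Rightarrow> 'b" where
  "lookup \<equiv> Poly_Mapping.lookup"

abbreviation keys :: "('a \<Rightarrow>\<^sub>0 'b::zero) \<Rightarrow> 'a set" where
  "keys \<equiv> Poly_Mapping.keys"

lemma lookup_smult [simp]: "lookup (smult c x) a = c * lookup x a"
  by (simp add: Defs.smult_def Poly_Mapping.map.rep_eq Poly_Mapping.when_def)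

lemma lookup_word: "lookup (word w) v = (if w = v then 1 else 0)"
  by (simp add: word_def lookup_single Poly_Mapping.when_def)

lemma lookup_single_if: "lookup (Poly_Mapping.single k c) k' = (if k = k' then c else 0)"
  by (simp add: lookup_single Poly_Mapping.when_def)

lemma keys_smult: "keys (smult c x) \<subseteq> keys x"
  by (auto simp: in_keys_iff)

lemma smult_sum: "smult c (\<Sum>i\<in>A. X i) = (\<Sum>i\<in>A. smult c (X i))"
  by (rule poly_mapping_eqI) (simp add: lookup_sum sum_distrib_left)

lemma smult_smult: "smult a (smult b x) = smult (a * b) x"
  by (rule poly_mapping_eqI) simp

lemma smult_one [simp]: "smult 1 x = x"
  by (rule poly_mapping_eqI) simp

lemma smult_zero [simp]: "smult 0 x = 0"
  by (rule poly_mapping_eqI) simp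

lemma smult_zero_right [simp]: "smult c 0 = 0"
  by (rule poly_mapping_eqI) simp

lemma smult_single: "smult c (Poly_Mapping.single a d) = Poly_Mapping.single a (c * d)"
  by (rule poly_mapping_eqI) (simp add: lookup_single Poly_Mapping.when_def)

definition lin_form :: "('a \<Rightarrow> 'k::field) \<Rightarrow> ('a \<Rightarrow>\<^sub>0 'k) \<Rightarrow> 'k" where
  "lin_form g x = (\<Sum>a\<in>keys x. lookup x a * g a)"

definition lin_map :: "('a \<Rightarrow> ('b \<Rightarrow>\<^sub>0 'k::field)) \<Rightarrow> ('a \<Rightarrow>\<^sub>0 'k) \<Rightarrow> ('b \<Rightarrow>\<^sub>0 'k)" where
  "lin_map g x = (\<Sum>a\<in>keys x. smult (lookup x a) (g a))"

lemma lin_form_superset: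
  "finite A \<Longrightarrow> keys x \<subseteq> A \<Longrightarrow> lin_form g x = (\<Sum>a\<in>A. lookup x a * g a)"
  unfolding lin_form_def by (rule sum.mono_neutral_left) (auto simp: in_keys_iff)

lemma lookup_lin_map: "lookup (lin_map g x) b = lin_form (\<lambda>a. lookup (g a) b) x"
  by (simp add: lin_map_def lin_form_def lookup_sum)

lemma lin_form_add: "lin_form g (x + y) = lin_form g x + lin_form g y"
proof -
  have f: "finite (keys x \<union> keys y)" by simp
  have k: "keys (x + y) \<subseteq> keys x \<union> keys y" by (rule keys_add)
  show ?thesis
    by (simp add: lin_form_superset[OF f k] lin_form_superset[OF f, of x]
        lin_form_superset[OF f, of y] lookup_add distrib_right sum.distrib)
qed

lemma lin_form_smult: "lin_form g (smult c x) = c * lin_form g x"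
proof -
  have "lin_form g (smult c x) = (\<Sum>a\<in>keys x. lookup (smult c x) a * g a)"
    by (rule lin_form_superset[OF finite_keys keys_smult])
  then show ?thesis by (simp add: lin_form_def sum_distrib_left mult.assoc)
qed

lemma lin_form_zero [simp]: "lin_form g 0 = 0"
  by (simp add: lin_form_def)

lemma lin_form_zero_fun [simp]: "lin_form (\<lambda>a. 0) x = 0"
  by (simp add: lin_form_def)

lemma lin_form_single: "lin_form g (Poly_Mapping.single a c) = c * g a"
  by (simp add: lin_form_superset[of "{a}"] lookup_single)

lemma lin_form_word: "lin_form g (word w) = g w"
  by (simp add: word_def lin_form_single)

lemma lin_form_sum: "lin_form g (\<Sum>i\<in>A. X i) = (\<Sum>i\<in>A. lin_form g (X i))"
  by (induction A rule: infinite_finite_induct) (auto simp: lin_form_add)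

lemma lin_form_diff: "lin_form g (x - y) = lin_form g x - lin_form g y"
  using lin_form_add[of g x "-y"] by (simp add: lin_form_def sum_negf)

lemma lin_form_fun_add: "lin_form (\<lambda>a. g a + h a) x = lin_form g x + lin_form h x"
  by (simp add: lin_form_def distrib_left sum.distrib)

lemma lin_form_fun_cmult: "lin_form (\<lambda>a. c * g a) x = c * lin_form g x"
  unfolding lin_form_def sum_distrib_left by (rule sum.cong) (auto simp: algebra_simps)

lemma lin_form_fun_multc: "lin_form (\<lambda>a. g a * c) x = lin_form g x * c"
  unfolding lin_form_def sum_distrib_right by (rule sum.cong) (auto simp: algebra_simps)

lemma lin_form_fun_sum: "lin_form (\<lambda>a. \<Sum>i\<in>A. g i a) x = (\<Sum>i\<in>A. lin_form (g i) x)"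
  unfolding lin_form_def sum_distrib_left by (rule sum.swap)

lemma lin_form_cong: "(\<And>a. a \<in> keys x \<Longrightarrow> g a = h a) \<Longrightarrow> lin_form g x = lin_form h x"
  by (simp add: lin_form_def)

lemma lin_form_indicator: "lin_form (\<lambda>a. if a = b then c else 0) x = lookup x b * c"
proof -
  have "(\<lambda>a. lookup x a * (if a = b then c else 0)) = (\<lambda>a. if a = b then lookup x b * c else 0)"
    by auto
  then show ?thesis by (simp only: lin_form_def) (simp add: sum.delta in_keys_iff)
qed

lemma keys_lin_map: "keys (lin_map g x) \<subseteq> (\<Union>a\<in>keys x. keys (g a))"
proof
  fix b assume "b \<in> keys (lin_map g x)"
  then have "lin_form (\<lambda>a. lookup (g a) b) x \<noteq> 0" by (simp add: in_keys_iff lookup_lin_map)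
  then obtain a where "a \<in> keys x" "lookup x a * lookup (g a) b \<noteq> 0"
    unfolding lin_form_def by (rule sum.not_neutral_contains_not_neutral)
  then show "b \<in> (\<Union>a\<in>keys x. keys (g a))" by (auto simp: in_keys_iff)
qed

lemma lin_form_lin_map: "lin_form g (lin_map h x) = lin_form (\<lambda>a. lin_form g (h a)) x"
proof -
  define B where "B = (\<Union>a\<in>keys x. keys (h a))"
  have fB: "finite B" by (simp add: B_def)
  have "lin_form g (lin_map h x) = (\<Sum>b\<in>B. lookup (lin_map h x) b * g b)"
    by (rule lin_form_superset[OF fB]) (unfold B_def, rule keys_lin_map)
  also have "\<dots> = (\<Sum>b\<in>B. \<Sum>a\<in>keys x. lookup x a * (lookup (h a) b * g b))"
    by (simp add: lookup_lin_map lin_form_def sum_distrib_right mult.assoc)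
  also have "\<dots> = (\<Sum>a\<in>keys x. lookup x a * (\<Sum>b\<in>B. lookup (h a) b * g b))"
    by (subst sum.swap) (simp add: sum_distrib_left)
  also have "\<dots> = (\<Sum>a\<in>keys x. lookup x a * lin_form g (h a))"
    by (rule sum.cong[OF refl]) (subst lin_form_superset[OF fB], auto simp: B_def)
  finally show ?thesis by (simp add: lin_form_def)
qed

lemma lin_map_add: "lin_map g (x + y) = lin_map g x + lin_map g y"
  by (rule poly_mapping_eqI) (simp add: lookup_lin_map lookup_add lin_form_add)

lemma lin_map_smult: "lin_map g (smult c x) = smult c (lin_map g x)"
  by (rule poly_mapping_eqI) (simp add: lookup_lin_map lin_form_smult)

lemma lin_map_zero [simp]: "lin_map g 0 = 0"
  by (simp add: lin_map_def)

lemma lin_map_single: "lin_map g (Poly_Mapping.single a c) = smult c (g a)"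
  by (rule poly_mapping_eqI) (simp add: lookup_lin_map lin_form_single)

lemma lin_map_word: "lin_map g (word w) = g w"
  by (rule poly_mapping_eqI) (simp add: lookup_lin_map lin_form_word)

lemma lin_map_sum: "lin_map g (\<Sum>i\<in>A. X i) = (\<Sum>i\<in>A. lin_map g (X i))"
  by (rule poly_mapping_eqI) (simp add: lookup_lin_map lookup_sum lin_form_sum)

lemma lin_map_diff: "lin_map g (x - y) = lin_map g x - lin_map g y"
  by (rule poly_mapping_eqI) (simp add: lookup_lin_map lookup_minus lin_form_diff)

lemma lin_map_fun_smult: "lin_map (\<lambda>a. smult c (g a)) x = smult c (lin_map g x)"
  by (rule poly_mapping_eqI) (simp add: lookup_lin_map lin_form_fun_cmult)

lemma lin_map_fun_sum: "lin_map (\<lambda>a. \<Sum>i\<in>A. g i a) x = (\<Sum>i\<in>A. lin_map (g i) x)"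
  by (rule poly_mapping_eqI) (simp add: lookup_lin_map lookup_sum lin_form_fun_sum)

lemma lin_map_cong: "(\<And>a. a \<in> keys x \<Longrightarrow> g a = h a) \<Longrightarrow> lin_map g x = lin_map h x"
  by (simp add: lin_map_def)

lemma lin_map_lin_map: "lin_map g (lin_map h x) = lin_map (\<lambda>a. lin_map g (h a)) x"
  by (rule poly_mapping_eqI) (simp add: lookup_lin_map lin_form_lin_map)

lemma lin_map_word_id: "lin_map word x = x"
  by (rule poly_mapping_eqI) (simp add: lookup_lin_map lookup_word lin_form_indicator)

lemma lin_map_swap:
  "lin_map (\<lambda>p. lin_map (\<lambda>q. H p q) y) x = lin_map (\<lambda>q. lin_map (\<lambda>p. H p q) x) y"
proof (rule poly_mapping_eqI)
  fix b
  have "(\<Sum>p\<in>keys x. lookup x p * (\<Sum>q\<in>keys y. lookup y q * lookup (H p q) b))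
      = (\<Sum>p\<in>keys x. \<Sum>q\<in>keys y. lookup y q * (lookup x p * lookup (H p q) b))"
    by (simp add: sum_distrib_left mult.left_commute)
  also have "\<dots> = (\<Sum>q\<in>keys y. \<Sum>p\<in>keys x. lookup y q * (lookup x p * lookup (H p q) b))"
    by (rule sum.swap)
  also have "\<dots> = (\<Sum>q\<in>keys y. lookup y q * (\<Sum>p\<in>keys x. lookup x p * lookup (H p q) b))"
    by (simp add: sum_distrib_left)
  finally show "lookup (lin_map (\<lambda>p. lin_map (\<lambda>q. H p q) y) x) b
           = lookup (lin_map (\<lambda>q. lin_map (\<lambda>p. H p q) x) y) b"
    by (simp add: lookup_lin_map lin_form_def)
qed

lemma TV_zero [simp]: "0 \<in> TV I"
  by (simp add: TV_def)

lemma TV_add: "x \<in> TV I \<Longrightarrow> y \<in> TV I \<Longrightarrow> x + y \<in> TV I"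
  unfolding TV_def using keys_add[of x y] by (simp add: subset_iff) blast

lemma TV_smult: "x \<in> TV I \<Longrightarrow> smult c x \<in> TV I"
  unfolding TV_def using keys_smult[of c x] by (simp add: subset_iff)

lemma TV_sum: "(\<And>i. i \<in> A \<Longrightarrow> X i \<in> TV I) \<Longrightarrow> (\<Sum>i\<in>A. X i) \<in> TV I"
  by (induction A rule: infinite_finite_induct) (auto intro: TV_add)

lemma TV_word: "w \<in> lists I \<Longrightarrow> word w \<in> TV I"
  by (simp add: TV_def word_def)

lemma TV_lin_map: "(\<And>a. a \<in> keys x \<Longrightarrow> g a \<in> TV I) \<Longrightarrow> lin_map g x \<in> TV I"
  unfolding lin_map_def by (intro TV_sum TV_smult) auto

lemma TV_diff: "x \<in> TV I \<Longrightarrow> y \<in> TV I \<Longrightarrow> x - y \<in> TV I"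
  unfolding diff_conv_add_uminus by (rule TV_add) (simp_all add: TV_def keys_minus)

lemma TV_keys: "x \<in> TV I \<Longrightarrow> w \<in> keys x \<Longrightarrow> w \<in> lists I"
  by (auto simp: TV_def)

lemma take_lists: "w \<in> lists I \<Longrightarrow> take i w \<in> lists I"
  by (auto dest: in_set_takeD)

lemma drop_lists: "w \<in> lists I \<Longrightarrow> drop i w \<in> lists I"
  by (auto dest: in_set_dropD)

lemma lin_on_add: "lin_on I F \<Longrightarrow> x \<in> TV I \<Longrightarrow> y \<in> TV I \<Longrightarrow> F (x + y) = F x + F y"
  by (simp add: lin_on_def)

lemma lin_on_smult: "lin_on I F \<Longrightarrow> x \<in> TV I \<Longrightarrow> F (smult c x) = smult c (F x)"
  by (simp add: lin_on_def)

lemma lin_on_TV: "lin_on I F \<Longrightarrow> x \<in> TV I \<Longrightarrow> F x \<in> TV I"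
  by (simp add: lin_on_def)

lemma lin_on_zero: "lin_on I F \<Longrightarrow> F 0 = 0"
  using lin_on_smult[of I F 0 0] by simp

lemma lin_on_sum:
  "lin_on I F \<Longrightarrow> (\<And>i. i \<in> A \<Longrightarrow> X i \<in> TV I) \<Longrightarrow> F (\<Sum>i\<in>A. X i) = (\<Sum>i\<in>A. F (X i))"
proof (induction A rule: infinite_finite_induct)
  case (insert a A)
  then show ?case by (simp add: lin_on_add TV_sum)
qed (auto simp: lin_on_zero)

lemma lin_on_lin_map:
  "lin_on I F \<Longrightarrow> (\<And>a. a \<in> keys x \<Longrightarrow> g a \<in> TV I) \<Longrightarrow> F (lin_map g x) = lin_map (\<lambda>a. F (g a)) x"
  unfolding lin_map_def by (subst lin_on_sum) (auto intro: TV_smult simp: lin_on_smult)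

lemma lin_on_eq_lin_map: "lin_on I F \<Longrightarrow> x \<in> TV I \<Longrightarrow> F x = lin_map (\<lambda>w. F (word w)) x"
  using lin_on_lin_map[of I F x word] by (simp add: lin_map_word_id TV_word TV_keys)

lemma lin_on_lin_mapI: "(\<And>w. w \<in> lists I \<Longrightarrow> g w \<in> TV I) \<Longrightarrow> lin_on I (lin_map g)"
  unfolding lin_on_def by (auto intro!: TV_lin_map simp: lin_map_add lin_map_smult TV_keys)

lemma bilin_on_lin_on_left: "bilin_on I m \<Longrightarrow> y \<in> TV I \<Longrightarrow> lin_on I (\<lambda>x. m x y)"
  by (simp add: bilin_on_def lin_on_def)

lemma bilin_on_lin_on_right: "bilin_on I m \<Longrightarrow> x \<in> TV I \<Longrightarrow> lin_on I (m x)"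
  by (simp add: bilin_on_def lin_on_def)

lemma bilin_on_lin_map:
  assumes m: "bilin_on I m"
    and g: "\<And>a. a \<in> keys x \<Longrightarrow> g a \<in> TV I" and h: "\<And>b. b \<in> keys y \<Longrightarrow> h b \<in> TV I"
  shows "m (lin_map g x) (lin_map h y) = lin_map (\<lambda>a. lin_map (\<lambda>b. m (g a) (h b)) y) x"
proof -
  have "m (lin_map g x) (lin_map h y) = lin_map (\<lambda>a. m (g a) (lin_map h y)) x"
    by (rule lin_on_lin_map[OF bilin_on_lin_on_left[OF m TV_lin_map[OF h]] g])
  also have "\<dots> = lin_map (\<lambda>a. lin_map (\<lambda>b. m (g a) (h b)) y) x"
    by (rule lin_map_cong) (rule lin_on_lin_map[OF bilin_on_lin_on_right[OF m g] h])
  finally show ?thesis .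
qed

lemma bilin_on_eq_lin_map:
  assumes m: "bilin_on I m" and x: "x \<in> TV I" and y: "y \<in> TV I"
  shows "m x y = lin_map (\<lambda>p. lin_map (\<lambda>q. m (word p) (word q)) y) x"
proof -
  have "m x y = lin_map (\<lambda>p. m (word p) y) x"
    by (rule lin_on_eq_lin_map[OF bilin_on_lin_on_left[OF m y] x])
  also have "\<dots> = lin_map (\<lambda>p. lin_map (\<lambda>q. m (word p) (word q)) y) x"
    by (rule lin_map_cong)
      (rule lin_on_eq_lin_map[OF bilin_on_lin_on_right[OF m] y], simp add: TV_word TV_keys[OF x])
  finally show ?thesis .
qed

definition homogeneous_part :: "nat \<Rightarrow> ('i, 'k::field) tens \<Rightarrow> ('i, 'k) tens" where
  "homogeneous_part n y = lin_map (\<lambda>w. if length w = n then word w else 0) y"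

lemma lookup_homogeneous_part:
  "lookup (homogeneous_part n y) v = (if length v = n then lookup y v else 0)"
proof -
  have "lin_form (\<lambda>w. lookup (if length w = n then word w else 0) v) y
      = lin_form (\<lambda>w. if w = v then (if length v = n then 1 else 0) else 0) y"
    by (rule lin_form_cong) (auto simp: lookup_word)
  then show ?thesis
    by (simp add: homogeneous_part_def lookup_lin_map lin_form_indicator)
qed

lemma TV_homogeneous_part: "y \<in> TV I \<Longrightarrow> homogeneous_part n y \<in> TV I"
  unfolding homogeneous_part_def by (intro TV_lin_map) (auto intro: TV_word dest: TV_keys)

section \<open>The tensor square and the deconcatenation coproduct\<close>

lemma lookup_single_pair:
  "lookup (Poly_Mapping.single (p', q') c) (p, q) = (if p' = p then (if q' = q then c else 0) else 0)"
  by (simp add: lookup_single Poly_Mapping.when_def)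

lemma tensor_as_lin_map:
  "tensor x y = lin_map (\<lambda>p. lin_map (\<lambda>q. Poly_Mapping.single (p, q) 1) y) x"
  unfolding tensor_def lin_map_def by (simp add: smult_sum smult_single)

lemma lookup_tensor: "lookup (tensor x y) (p, q) = lookup x p * lookup y q"
proof -
  have "lookup (tensor x y) (p, q)
      = lin_form (\<lambda>p'. lin_form (\<lambda>q'. if p' = p then (if q' = q then 1 else 0) else 0) y) x"
    by (simp add: tensor_as_lin_map lookup_lin_map lookup_single_pair)
  also have "\<dots> = lin_form (\<lambda>p'. if p' = p then lookup y q else 0) x"
    by (rule lin_form_cong) (simp add: lin_form_indicator)
  finally show ?thesis by (simp add: lin_form_indicator)
qed

lemma lin_map_tensor: "lin_map G (tensor A B) = lin_map (\<lambda>p. lin_map (\<lambda>q. G (p, q)) B) A"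
  by (simp add: tensor_as_lin_map lin_map_lin_map lin_map_single)

lemma lin_form_tensor:
  "lin_form (\<lambda>(x, y). g x * h y) (tensor A B) = lin_form g A * lin_form h B"
  by (simp add: tensor_as_lin_map lin_form_lin_map lin_form_single lin_form_fun_cmult
      lin_form_fun_multc)

definition deconc :: "'i list \<Rightarrow> ('i, 'k::field) tens2" where
  "deconc w = (\<Sum>k\<le>length w. Poly_Mapping.single (take k w, drop k w) 1)"

lemma Delta_as_lin_map: "Delta x = lin_map deconc x"
  unfolding Delta_def lin_map_def deconc_def by (simp add: smult_sum smult_single)

lemma Delta_word: "Delta (word w) = deconc w"
  by (simp add: Delta_as_lin_map lin_map_word)

lemma take_drop_eq_Pair_iff:
  "k \<le> length w \<Longrightarrow> ((take k w, drop k w) = (x, y)) = (k = length x \<and> w = x @ y)"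
  by (metis append_eq_conv_conj append_take_drop_id length_take min.absorb2 prod.inject)

lemma lookup_deconc:
  "lookup (deconc w :: ('i, 'k::field) tens2) (x, y) = (if w = x @ y then 1 else 0)"
proof -
  have "lookup (deconc w :: ('i, 'k) tens2) (x, y)
      = (\<Sum>k\<le>length w. if k = length x then (if w = x @ y then 1 else 0) else 0)"
    unfolding deconc_def lookup_sum
  proof (rule sum.cong[OF refl])
    fix k assume "k \<in> {..length w}"
    then have "((take k w, drop k w) = (x, y)) = (k = length x \<and> w = x @ y)"
      by (intro take_drop_eq_Pair_iff) simp
    then show "lookup (Poly_Mapping.single (take k w, drop k w) (1::'k)) (x, y)
        = (if k = length x then (if w = x @ y then 1 else 0) else 0)"
      by (simp only: lookup_single_if) auto
  qed
  then show ?thesis by (auto simp: sum.delta)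
qed

lemma lookup_Delta: "lookup (Delta X) (x, y) = lookup X (x @ y)"
  by (simp add: Delta_as_lin_map lookup_lin_map lookup_deconc lin_form_indicator)

lemma lin_form_Delta:
  "lin_form G (Delta z) = lin_form (\<lambda>w. \<Sum>k\<le>length w. G (take k w, drop k w)) z"
  by (simp add: Delta_as_lin_map lin_form_lin_map deconc_def lin_form_sum lin_form_single)

lemma tmap_as_lin_map: "tmap f g X = lin_map (\<lambda>(p, q). tensor (f (word p)) (g (word q))) X"
  unfolding tmap_def lin_map_def by (rule sum.cong) auto

lemma mult_ext_as_lin_map: "mult_ext m X = lin_map (\<lambda>(p, q). m (word p) (word q)) X"
  unfolding mult_ext_def lin_map_def by (rule sum.cong) auto

lemma mult_ext_sum: "mult_ext m (\<Sum>i\<in>A. X i) = (\<Sum>i\<in>A. mult_ext m (X i))"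
  by (simp add: mult_ext_as_lin_map lin_map_sum)

lemma mult_ext_tensor:
  assumes m: "bilin_on I m" and A: "A \<in> TV I" and B: "B \<in> TV I"
  shows "mult_ext m (tensor A B) = m A B"
  by (simp add: mult_ext_as_lin_map lin_map_tensor bilin_on_eq_lin_map[OF m A B])

lemma mult2_deconc: "mult2 m (deconc a) (deconc b) = (\<Sum>i\<le>length a. \<Sum>j\<le>length b.
   tensor (m (word (take i a)) (word (take j b))) (m (word (drop i a)) (word (drop j b))))"
proof -
  have "mult2 m X Y = lin_map (\<lambda>(p, q). lin_map (\<lambda>(r, s).
      tensor (m (word p) (word r)) (m (word q) (word s))) Y) X" for X Y
    unfolding mult2_def lin_map_def by (rule sum.cong) (auto simp: smult_sum smult_smult split_beta)
  then show ?thesis by (simp add: deconc_def lin_map_sum lin_map_single)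
qed

section \<open>The shuffle algebra\<close>

definition lcons :: "'i \<Rightarrow> ('i, 'k::field) tens \<Rightarrow> ('i, 'k) tens" where
  "lcons l X = lin_map (\<lambda>w. word (l # w)) X"

definition residual :: "'i \<Rightarrow> ('i, 'k::field) tens \<Rightarrow> ('i, 'k) tens" where
  "residual l X = lin_map (\<lambda>p. if p \<noteq> [] \<and> hd p = l then word (tl p) else 0) X"

lemma lookup_lcons_Nil [simp]: "lookup (lcons c X) [] = 0"
  by (simp add: lcons_def lookup_lin_map lookup_word lin_form_def)

lemma lcons_word: "lcons l (word w) = word (l # w)"
  by (simp add: lcons_def lin_map_word)

lemma lookup_lcons_Cons: "lookup (lcons c X) (l # v) = (if c = l then lookup X v else 0)"
proof -
  have "lookup (lcons c X) (l # v) = lin_form (\<lambda>w. if c = l then (if w = v then 1 else 0) else 0) X"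
    unfolding lcons_def lookup_lin_map by (rule lin_form_cong) (auto simp: lookup_word)
  then show ?thesis by (cases "c = l") (simp_all add: lin_form_indicator lin_form_def)
qed

lemma lookup_residual: "lookup (residual l X) v = lookup X (l # v)"
proof -
  have "lookup (residual l X) v = lin_form (\<lambda>p. if p = l # v then 1 else 0) X"
    unfolding residual_def lookup_lin_map
    by (rule lin_form_cong) (auto simp: lookup_word neq_Nil_conv)
  then show ?thesis by (simp add: lin_form_indicator)
qed

lemma lin_form_residual:
  "lin_form g (residual l X) = lin_form (\<lambda>p. if p \<noteq> [] \<and> hd p = l then g (tl p) else 0) X"
  unfolding residual_def lin_form_lin_map by (rule lin_form_cong) (auto simp: lin_form_word)

lemma sum_list_map_word_Cons: "(\<Sum>w\<leftarrow>L. word (c # w)) = lcons c (\<Sum>w\<leftarrow>L. word w)"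
  by (induction L) (simp_all add: lcons_def lin_map_add lin_map_word)

lemma shuffle_word_Nil_left [simp]: "shuffle_word [] q = word q"
  by (simp add: shuffle_word_def)

lemma shuffle_word_Nil_right [simp]: "shuffle_word p [] = word p"
  by (cases p) (simp_all add: shuffle_word_def)

lemma shuffle_word_Cons_Cons: "shuffle_word (x # xs) (y # ys)
  = lcons x (shuffle_word xs (y # ys)) + lcons y (shuffle_word (x # xs) ys)"
  by (simp add: shuffle_word_def comp_def sum_list_map_word_Cons)

lemma lookup_shuffle_word_Nil:
  "lookup (shuffle_word p q :: ('i, 'k::field) tens) [] = (if p = [] \<and> q = [] then 1 else 0)"
  by (induction p q rule: shuffle_list.induct)
    (simp_all add: lookup_word shuffle_word_Cons_Cons lookup_add)

lemma lookup_shuffle_word_Cons: "lookup (shuffle_word p q :: ('i, 'k::field) tens) (l # v) =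
   (if p \<noteq> [] \<and> hd p = l then lookup (shuffle_word (tl p) q :: ('i, 'k) tens) v else 0) +
   (if q \<noteq> [] \<and> hd q = l then lookup (shuffle_word p (tl q) :: ('i, 'k) tens) v else 0)"
proof (cases p)
  case Nil then show ?thesis by (cases q) (auto simp: lookup_word)
next
  case (Cons x xs) then show ?thesis
    by (cases q) (auto simp: lookup_word shuffle_word_Cons_Cons lookup_add lookup_lcons_Cons)
qed

lemma shuffle_as_lin_map: "shuffle x y = lin_map (\<lambda>p. lin_map (\<lambda>q. shuffle_word p q) y) x"
  unfolding shuffle_def lin_map_def by (simp add: smult_sum smult_smult)

lemma shuffle_word_word: "shuffle (word p) (word q) = shuffle_word p q"
  by (simp add: shuffle_as_lin_map lin_map_word)

lemma shuffle_empty_word_right: "shuffle X (word []) = X"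
  by (simp add: shuffle_as_lin_map lin_map_word lin_map_word_id)

lemma shuffle_lin_map_left: "shuffle (lin_map g x) Y = lin_map (\<lambda>a. shuffle (g a) Y) x"
  by (simp add: shuffle_as_lin_map lin_map_lin_map)

lemma shuffle_lin_map_right: "shuffle X (lin_map g y) = lin_map (\<lambda>b. shuffle X (g b)) y"
  by (simp add: shuffle_as_lin_map lin_map_lin_map lin_map_swap[of _ y X])

lemma shuffle_smult_left: "shuffle (smult c X) Z = smult c (shuffle X Z)"
  by (simp add: shuffle_as_lin_map lin_map_smult)

lemma shuffle_sum_left: "shuffle (\<Sum>i\<in>A. X i) Z = (\<Sum>i\<in>A. shuffle (X i) Z)"
  by (simp add: shuffle_as_lin_map lin_map_sum)

lemma shuffle_smult_right: "shuffle Z (smult c X) = smult c (shuffle Z X)"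
  by (simp add: shuffle_as_lin_map lin_map_smult lin_map_fun_smult)

lemma shuffle_sum_right: "shuffle Z (\<Sum>i\<in>A. X i) = (\<Sum>i\<in>A. shuffle Z (X i))"
  by (simp add: shuffle_as_lin_map lin_map_sum lin_map_fun_sum)

lemma lookup_shuffle_Nil: "lookup (shuffle X Y) [] = lookup X [] * lookup Y []"
proof -
  have "lookup (shuffle X Y) []
      = lin_form (\<lambda>p. lin_form (\<lambda>q. if q = [] then (if p = [] then 1 else 0) else 0) Y) X"
    unfolding shuffle_as_lin_map lookup_lin_map
    by (intro lin_form_cong) (auto simp: lookup_shuffle_word_Nil)
  also have "\<dots> = lin_form (\<lambda>p. if p = [] then lookup Y [] else 0) X"
    by (rule lin_form_cong) (simp add: lin_form_indicator)
  finally show ?thesis by (simp add: lin_form_indicator)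
qed

lemma lookup_shuffle_Cons: "lookup (shuffle X Y) (l # v)
  = lookup (shuffle (residual l X) Y) v + lookup (shuffle X (residual l Y)) v"
proof -
  have "lookup (shuffle X Y) (l # v) =
     lin_form (\<lambda>p. lin_form (\<lambda>q. (if p \<noteq> [] \<and> hd p = l
       then lookup (shuffle_word (tl p) q) v else 0)) Y) X +
     lin_form (\<lambda>p. lin_form (\<lambda>q. (if q \<noteq> [] \<and> hd q = l
       then lookup (shuffle_word p (tl q)) v else 0)) Y) X"
    unfolding shuffle_as_lin_map lookup_lin_map lookup_shuffle_word_Cons
    by (simp add: lin_form_fun_add)
  also have "lin_form (\<lambda>p. lin_form (\<lambda>q. (if p \<noteq> [] \<and> hd p = l
      then lookup (shuffle_word (tl p) q) v else 0)) Y) X = lookup (shuffle (residual l X) Y) v"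
    unfolding shuffle_as_lin_map lookup_lin_map lin_form_residual by (rule lin_form_cong) auto
  also have "lin_form (\<lambda>p. lin_form (\<lambda>q. (if q \<noteq> [] \<and> hd q = l
      then lookup (shuffle_word p (tl q)) v else 0)) Y) X = lookup (shuffle X (residual l Y)) v"
    unfolding shuffle_as_lin_map lookup_lin_map lin_form_residual ..
  finally show ?thesis .
qed

lemma alternating_telescope:
  fixes u :: "nat \<Rightarrow> 'a::comm_ring_1"
  shows "(\<Sum>j\<le>Suc N. (-1)^j * ((if 0 < j then u (j - 1) else 0) + (if j < Suc N then u j else 0)))
    = 0"
proof -
  have partial: "(\<Sum>j\<le>n. (-1)^j * ((if 0 < j then u (j - 1) else 0) + u j)) = (-1)^n * u n" for n
    by (induction n) (simp_all add: algebra_simps)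
  show ?thesis
    using partial[of N] by simp
qed

definition shuffle_telescope :: "'i list \<Rightarrow> nat \<Rightarrow> ('i, 'k::field) tens" where
  "shuffle_telescope z j = lcons (z ! j) (shuffle_word (rev (take j z)) (drop (Suc j) z))"

lemma shuffle_word_rev_take_drop:
  assumes j: "j \<le> length z" and z: "z \<noteq> []"
  shows "(shuffle_word (rev (take j z)) (drop j z) :: ('i, 'k::field) tens) =
     (if 0 < j then shuffle_telescope z (j - 1) else 0)
   + (if j < length z then shuffle_telescope z j else 0)"
proof (cases j)
  case 0
  then show ?thesis
    using z by (cases z) (simp_all add: shuffle_telescope_def lcons_word)
next
  case (Suc i)
  have rev_take: "rev (take j z) = z ! i # rev (take i z)"
    using Suc j by (simp add: take_Suc_conv_app_nth)
  show ?thesis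
  proof (cases "j < length z")
    case True
    have drop: "drop j z = z ! j # drop (Suc j) z" "drop (Suc i) z = z ! j # drop (Suc j) z"
      using True Suc by (simp_all add: Cons_nth_drop_Suc)
    have "(shuffle_word (rev (take j z)) (drop j z) :: ('i, 'k) tens)
        = lcons (z ! i) (shuffle_word (rev (take i z)) (z ! j # drop (Suc j) z))
        + lcons (z ! j) (shuffle_word (z ! i # rev (take i z)) (drop (Suc j) z))"
      by (simp only: rev_take drop shuffle_word_Cons_Cons)
    then show ?thesis
      using True by (simp add: shuffle_telescope_def Suc drop(2) rev_take[symmetric])
  next
    case False
    then have drop: "drop j z = []" "drop (Suc i) z = []"
      using Suc j by simp_all
    have "(shuffle_word (rev (take j z)) (drop j z) :: ('i, 'k) tens)
        = word (z ! i # rev (take i z))"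
      by (simp only: rev_take drop shuffle_word_Nil_right)
    then show ?thesis
      using False by (simp add: shuffle_telescope_def Suc drop lcons_word)
  qed
qed

lemma shuffle_antipode_as_lin_map:
  "shuffle_antipode x = lin_map (\<lambda>w. smult ((-1) ^ length w) (word (rev w))) x"
  unfolding shuffle_antipode_def lin_map_def by (simp add: smult_smult mult.commute)

lemma shuffle_antipode_word: "shuffle_antipode (word t) = smult ((-1) ^ length t) (word (rev t))"
  by (simp add: shuffle_antipode_as_lin_map lin_map_word)

lemma lin_map_shuffle_antipode_tensor:
  "lin_map (\<lambda>(p, q). shuffle (shuffle_antipode (word p)) (word q)) (tensor A B)
   = shuffle (shuffle_antipode A) B"
proof -
  have "shuffle (shuffle_antipode A) B
      = shuffle (lin_map (\<lambda>p. shuffle_antipode (word p)) A) (lin_map word B)"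
    by (simp add: shuffle_antipode_as_lin_map lin_map_word lin_map_word_id)
  also have "\<dots> = lin_map (\<lambda>p. lin_map (\<lambda>q. shuffle (shuffle_antipode (word p)) (word q)) B) A"
    by (simp add: shuffle_lin_map_left shuffle_lin_map_right) (rule lin_map_swap[symmetric])
  finally show ?thesis
    by (simp add: lin_map_tensor)
qed


lemma shuffle_antipode_convolution_word:
  "(\<Sum>j\<le>length z. shuffle (shuffle_antipode (word (take j z))) (word (drop j z))) =
   (if z = [] then word [] else (0 :: ('i, 'k::field) tens))"
proof (cases z)
  case Nil
  then show ?thesis by (simp add: shuffle_antipode_word shuffle_smult_left shuffle_word_word)
next
  case (Cons a z')
  let ?T = "shuffle_telescope z :: nat \<Rightarrow> ('i, 'k) tens"
  have "shuffle (shuffle_antipode (word (take j z))) (word (drop j z)) =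
        smult ((-1) ^ j) ((if 0 < j then ?T (j - 1) else 0) + (if j < length z then ?T j else 0))"
    if "j \<le> length z" for j
    using that Cons shuffle_word_rev_take_drop[OF that, where 'k='k]
    by (simp add: shuffle_antipode_word shuffle_smult_left shuffle_word_word min_def)
  then have "(\<Sum>j\<le>length z. shuffle (shuffle_antipode (word (take j z))) (word (drop j z)))
      = (\<Sum>j\<le>Suc (length z'). smult ((-1) ^ j)
          ((if 0 < j then ?T (j - 1) else 0) + (if j < Suc (length z') then ?T j else 0)))"
    using Cons by (intro sum.cong) auto
  also have "\<dots> = 0"
  proof (rule poly_mapping_eqI)
    fix v
    show "lookup (\<Sum>j\<le>Suc (length z'). smult ((-1) ^ j)
        ((if 0 < j then ?T (j - 1) else 0) + (if j < Suc (length z') then ?T j else 0))) v = lookup 0 v"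
      using alternating_telescope[of "\<lambda>j. lookup (?T j) v" "length z'"]
      by (simp add: lookup_sum lookup_add lookup_zero if_distrib[of "\<lambda>x. lookup x v"] cong: if_cong)
  qed
  finally show ?thesis
    using Cons by simp
qed

definition prefix_letters :: "('i, 'k::field) tens \<Rightarrow> ('i, 'k) tens \<Rightarrow> ('i, 'k) tens" where
  "prefix_letters X Y = lin_map (\<lambda>p. if length p = 1 then lin_map (\<lambda>q. word (p @ q)) Y else 0) X"

lemma lookup_prefix_letters_Nil [simp]: "lookup (prefix_letters X Y) [] = 0"
proof -
  have "lookup (if length p = 1 then lin_map (\<lambda>q. word (p @ q)) Y else 0) [] = 0" for p
  proof (cases "length p = 1")
    case True
    then have "lin_form (\<lambda>q. lookup (word (p @ q)) []) Y = lin_form (\<lambda>q. 0) Y"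
      by (intro lin_form_cong) (auto simp: lookup_word)
    then show ?thesis
      using True by (simp add: lookup_lin_map)
  qed simp
  then show ?thesis
    by (simp add: prefix_letters_def lookup_lin_map)
qed

lemma lookup_prefix_letters_Cons: "lookup (prefix_letters X Y) (l # v) = lookup X [l] * lookup Y v"
proof -
  have "lookup (if length p = 1 then lin_map (\<lambda>q. word (p @ q)) Y else 0) (l # v)
      = (if p = [l] then lookup Y v else 0)" for p
  proof (cases "length p = 1")
    case True
    then obtain a where "p = [a]"
      by (cases p) auto
    then show ?thesis
      by (cases "a = l") (simp_all add: lookup_lin_map lookup_word lin_form_indicator)
  qed auto
  then show ?thesis
    by (simp add: prefix_letters_def lookup_lin_map lin_form_indicator)
qed

lemma TV_prefix_letters: "X \<in> TV I \<Longrightarrow> Y \<in> TV I \<Longrightarrow> prefix_letters X Y \<in> TV I"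
  unfolding prefix_letters_def
  by (intro TV_lin_map) (auto intro!: TV_lin_map TV_word dest!: TV_keys)

section \<open>Binomial polynomials and finite sums\<close>

definition binom_poly :: "nat \<Rightarrow> 'k::field_char_0 poly" where
  "binom_poly j = Polynomial.smult (inverse (fact j)) (\<Prod>i<j. [:- of_nat i, 1:])"

lemma poly_binom_poly: "poly (binom_poly j :: 'k::field_char_0 poly) (of_nat k) = of_nat (k choose j)"
  by (simp add: binom_poly_def poly_prod binomial_gbinomial gbinomial_prod_rev atLeast0LessThan
      divide_inverse mult.commute)

lemma coeff_binom_poly_0: "0 < j \<Longrightarrow> coeff (binom_poly j :: 'k::field_char_0 poly) 0 = 0"
  using poly_binom_poly[of j 0, where 'k='k] by (simp add: poly_0_coeff_0)

lemma coeff_binom_poly_mult_1: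
  assumes "0 < i" "0 < l"
  shows "coeff (binom_poly i * binom_poly l :: 'k::field_char_0 poly) 1 = 0"
  using coeff_binom_poly_0[OF assms(1), where 'k='k] coeff_binom_poly_0[OF assms(2), where 'k='k]
  by (simp add: coeff_mult atMost_Suc)

lemma poly_eq_if_eq_on_nats:
  fixes p q :: "'k::field_char_0 poly"
  assumes "\<And>k. poly p (of_nat k) = poly q (of_nat k)"
  shows "p = q"
proof (rule ccontr)
  assume "p \<noteq> q"
  then have "finite {x. poly (p - q) x = 0}"
    by (intro poly_roots_finite) simp
  moreover have "range (of_nat :: nat \<Rightarrow> 'k) \<subseteq> {x. poly (p - q) x = 0}"
    using assms by auto
  ultimately have "finite (range (of_nat :: nat \<Rightarrow> 'k))"
    using finite_subset by blast
  then show False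
    using finite_imageD[OF _ inj_of_nat] by blast
qed

lemma pascal_sum:
  fixes a :: "nat \<Rightarrow> 'a::comm_ring_1"
  shows "(\<Sum>j\<le>k. of_nat (k choose j) * (a j + a (Suc j))) = (\<Sum>j\<le>Suc k. of_nat (Suc k choose j) * a j)"
proof -
  have shift: "(\<Sum>j\<le>k. of_nat (k choose j) * a j)
      = a 0 + (\<Sum>j\<le>k. of_nat (k choose Suc j) * a (Suc j))"
  proof -
    have "(\<Sum>j\<le>k. of_nat (k choose j) * a j) = (\<Sum>j\<le>Suc k. of_nat (k choose j) * a j)"
      by (simp add: binomial_eq_0)
    also have "\<dots> = a 0 + (\<Sum>j\<le>k. of_nat (k choose Suc j) * a (Suc j))"
      by (subst sum.atMost_Suc_shift) (simp add: binomial_eq_0)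
    finally show ?thesis .
  qed
  have "(\<Sum>j\<le>Suc k. of_nat (Suc k choose j) * a j)
      = a 0 + (\<Sum>j\<le>k. of_nat (Suc k choose Suc j) * a (Suc j))"
    by (subst sum.atMost_Suc_shift) simp
  also have "\<dots> = a 0 + (\<Sum>j\<le>k. of_nat (k choose j) * a (Suc j))
                     + (\<Sum>j\<le>k. of_nat (k choose Suc j) * a (Suc j))"
    by (simp add: distrib_right sum.distrib)
  also have "\<dots> = (\<Sum>j\<le>k. of_nat (k choose j) * (a j + a (Suc j)))"
    by (simp add: shift distrib_left sum.distrib)
  finally show ?thesis by simp
qed

lemma pascal_sum_smult:
  fixes Q :: "nat \<Rightarrow> ('i, 'k::field) tens"
  shows "(\<Sum>j\<le>k. smult (of_nat (k choose j)) (Q j + Q (Suc j)))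
       = (\<Sum>j\<le>Suc k. smult (of_nat (Suc k choose j)) (Q j))"
  by (rule poly_mapping_eqI) (simp only: lookup_sum lookup_smult lookup_add, rule pascal_sum)

lemma sum_atMost_eq_if_vanish_above:
  fixes g :: "nat \<Rightarrow> 'a::comm_monoid_add"
  assumes "\<And>j. k < j \<Longrightarrow> g j = 0" "\<And>j. N < j \<Longrightarrow> g j = 0"
  shows "sum g {..k} = sum g {..N}"
proof -
  have "sum g {..k} = sum g {..max k N}"
    by (rule sum.mono_neutral_left) (auto intro: assms(1))
  also have "\<dots> = sum g {..N}"
    by (rule sum.mono_neutral_right) (auto intro: assms(2))
  finally show ?thesis .
qed

lemma sum_if_take_eq_Nil: "(\<Sum>j\<le>length b. if take j b = [] then f j else 0) = f 0"
  by (cases "b = []") (simp_all add: sum.delta'[of _ 0, symmetric] cong: if_cong)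

lemma sum_sum_if_take_eq_Nil:
  "(\<Sum>i\<le>length a. \<Sum>j\<le>length b.
      (if take j b = [] then f i j else 0) + (if take i a = [] then g i j else 0))
   = (\<Sum>i\<le>length a. f i 0) + (\<Sum>j\<le>length b. g 0 j)"
proof -
  have "(\<Sum>i\<le>length a. \<Sum>j\<le>length b. if take j b = [] then f i j else 0)
      = (\<Sum>i\<le>length a. f i 0)"
    by (rule sum.cong[OF refl]) (rule sum_if_take_eq_Nil)
  moreover have "(\<Sum>i\<le>length a. \<Sum>j\<le>length b. if take i a = [] then g i j else 0)
      = (\<Sum>j\<le>length b. g 0 j)"
    by (subst sum.swap, rule sum.cong[OF refl]) (rule sum_if_take_eq_Nil)
  ultimately show ?thesis
    by (simp only: sum.distrib)
qed

lemma sum_triangle_reindex: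
  fixes F :: "nat \<Rightarrow> nat \<Rightarrow> 'a::comm_monoid_add"
  shows "(\<Sum>k\<le>n. \<Sum>i\<in>{1..k}. F i k) = (\<Sum>i\<in>{1..n}. \<Sum>k'\<le>n - i. F i (i + k'))"
proof (induction n)
  case (Suc n)
  have "(\<Sum>i\<in>{1..n}. \<Sum>k'\<le>Suc n - i. F i (i + k'))
      = (\<Sum>i\<in>{1..n}. (\<Sum>k'\<le>n - i. F i (i + k')) + F i (Suc n))"
  proof (rule sum.cong[OF refl])
    fix i assume "i \<in> {1..n}"
    then have "Suc n - i = Suc (n - i)" "i + Suc (n - i) = Suc n" by auto
    then show "(\<Sum>k'\<le>Suc n - i. F i (i + k')) = (\<Sum>k'\<le>n - i. F i (i + k')) + F i (Suc n)"
      by simp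
  qed
  then show ?case
    using Suc.IH by (simp add: sum.distrib add_ac)
qed simp

section \<open>Commutative bialgebra structures on the tensor coalgebra\<close>

locale comm_tensor_bialgebra =
  fixes I :: "'i set"
    and m :: "('i, 'k::field_char_0) tens \<Rightarrow> ('i, 'k) tens \<Rightarrow> ('i, 'k) tens"
    and u :: "('i, 'k) tens"
  assumes bilin: "bilin_on I m"
    and assoc: "\<forall>x\<in>TV I. \<forall>y\<in>TV I. \<forall>z\<in>TV I. m (m x y) z = m x (m y z)"
    and comm: "\<forall>x\<in>TV I. \<forall>y\<in>TV I. m x y = m y x"
    and unit: "\<forall>x\<in>TV I. m u x = x \<and> m x u = x"
    and Delta_mult: "\<forall>x\<in>TV I. \<forall>y\<in>TV I. Delta (m x y) = mult2 m (Delta x) (Delta y)"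
    and Delta_unit: "Delta u = tensor u u"
    and eps_mult: "\<forall>x\<in>TV I. \<forall>y\<in>TV I. eps (m x y) = eps x * eps y"
    and eps_unit: "eps u = 1"
begin

lemma m_TV: "x \<in> TV I \<Longrightarrow> y \<in> TV I \<Longrightarrow> m x y \<in> TV I"
  using bilin by (simp add: bilin_on_def)

lemma m_words_TV: "p \<in> lists I \<Longrightarrow> q \<in> lists I \<Longrightarrow> m (word p) (word q) \<in> TV I"
  by (intro m_TV TV_word)

lemma lin_on_m_left: "y \<in> TV I \<Longrightarrow> lin_on I (\<lambda>x. m x y)"
  by (rule bilin_on_lin_on_left[OF bilin])

lemma lin_on_m_right: "x \<in> TV I \<Longrightarrow> lin_on I (m x)"
  by (rule bilin_on_lin_on_right[OF bilin])

lemma m_zero_left [simp]: "y \<in> TV I \<Longrightarrow> m 0 y = 0"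
  using lin_on_zero[OF lin_on_m_left] by blast

lemma m_zero_right [simp]: "x \<in> TV I \<Longrightarrow> m x 0 = 0"
  using lin_on_zero[OF lin_on_m_right] by blast

lemma m_swap_middle:
  assumes "a \<in> TV I" "b \<in> TV I" "c \<in> TV I" "d \<in> TV I"
  shows "m (m a b) (m c d) = m (m a c) (m b d)"
proof -
  have "m (m a b) (m c d) = m a (m (m b c) d)"
    using assms assoc by (simp add: m_TV)
  also have "m b c = m c b"
    using assms comm by simp
  finally show ?thesis
    using assms assoc by (simp add: m_TV)
qed

lemma m_sum_sum:
  assumes "\<And>i. i \<in> A \<Longrightarrow> X i \<in> TV I" "\<And>j. j \<in> B \<Longrightarrow> Y j \<in> TV I"
  shows "m (\<Sum>i\<in>A. X i) (\<Sum>j\<in>B. Y j) = (\<Sum>i\<in>A. \<Sum>j\<in>B. m (X i) (Y j))"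
proof -
  have "m (\<Sum>i\<in>A. X i) (\<Sum>j\<in>B. Y j) = (\<Sum>i\<in>A. m (X i) (\<Sum>j\<in>B. Y j))"
    by (rule lin_on_sum[OF lin_on_m_left]) (auto intro: TV_sum assms)
  also have "\<dots> = (\<Sum>i\<in>A. \<Sum>j\<in>B. m (X i) (Y j))"
    by (rule sum.cong[OF refl], rule lin_on_sum[OF lin_on_m_right]) (auto intro: assms)
  finally show ?thesis .
qed

lemma m_smult_smult:
  "x \<in> TV I \<Longrightarrow> y \<in> TV I \<Longrightarrow> m (smult a x) (smult b y) = smult (a * b) (m x y)"
  by (simp add: lin_on_smult[OF lin_on_m_left] lin_on_smult[OF lin_on_m_right] TV_smult
      smult_smult m_TV mult.commute)

text \<open>The unit is grouplike, so its coefficients are multiplicative along concatenation;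
  a key of maximal length \<open>w\<close> would produce the longer key \<open>w @ w\<close>.\<close>

lemma unit_eq_empty_word: "u = word []"
proof -
  have multiplicative: "lookup u (x @ y) = lookup u x * lookup u y" for x y
    using arg_cong[OF Delta_unit, of "\<lambda>X. lookup X (x, y)"] by (simp add: lookup_Delta lookup_tensor)
  have keys_u: "keys u \<subseteq> {[]}"
  proof (rule ccontr)
    assume "\<not> keys u \<subseteq> {[]}"
    then obtain w where w: "w \<in> keys u" "w \<noteq> []" "\<forall>v\<in>keys u. length v \<le> length w"
      using Max_in[of "length ` keys u"] Max_ge[of "length ` keys u"] by fastforce
    have "w @ w \<in> keys u"
      using w(1) by (simp add: multiplicative in_keys_iff)
    then show False
      using w(2,3) by fastforce
  qed
  have "lookup u [] = 1"
    using eps_unit by (simp add: eps_def)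
  then show ?thesis
    using keys_u by (intro poly_mapping_eqI) (auto simp: lookup_word in_keys_iff)
qed

lemma m_empty_word_left: "x \<in> TV I \<Longrightarrow> m (word []) x = x"
  using unit unit_eq_empty_word by auto

lemma m_empty_word_right: "x \<in> TV I \<Longrightarrow> m x (word []) = x"
  using unit unit_eq_empty_word by auto

lemma lookup_m_Nil: "x \<in> TV I \<Longrightarrow> y \<in> TV I \<Longrightarrow> lookup (m x y) [] = lookup x [] * lookup y []"
  using eps_mult by (simp add: eps_def)

lemma lin_map_m_tensor:
  assumes F: "lin_on I F" and A: "A \<in> TV I" and B: "B \<in> TV I"
  shows "lin_map (\<lambda>(p, q). m (F (word p)) (word q)) (tensor A B) = m (F A) B"
proof -
  have "m (F A) B = m (lin_map (\<lambda>p. F (word p)) A) (lin_map word B)"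
    using lin_on_eq_lin_map[OF F A] lin_map_word_id[of B] by simp
  also have "\<dots> = lin_map (\<lambda>p. lin_map (\<lambda>q. m (F (word p)) (word q)) B) A"
    by (rule bilin_on_lin_map[OF bilin])
      (auto intro: lin_on_TV[OF F] TV_word dest: TV_keys[OF A] TV_keys[OF B])
  finally show ?thesis by (simp add: lin_map_tensor)
qed

lemma lin_map_m_of_words:
  assumes g: "\<And>w. w \<in> lists I \<Longrightarrow> g w \<in> TV I"
    and on_words: "\<And>a b. a \<in> lists I \<Longrightarrow> b \<in> lists I \<Longrightarrow>
      lin_map g (m (word a) (word b)) = m (g a) (g b)"
    and x: "x \<in> TV I" and y: "y \<in> TV I"
  shows "lin_map g (m x y) = m (lin_map g x) (lin_map g y)"
proof -
  have "lin_map g (m x y) = lin_map (\<lambda>p. lin_map (\<lambda>q. lin_map g (m (word p) (word q))) y) x"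
    by (simp add: bilin_on_eq_lin_map[OF bilin x y] lin_map_lin_map)
  also have "\<dots> = lin_map (\<lambda>p. lin_map (\<lambda>q. m (g p) (g q)) y) x"
    by (intro lin_map_cong) (simp add: on_words TV_keys[OF x] TV_keys[OF y])
  also have "\<dots> = m (lin_map g x) (lin_map g y)"
    by (rule bilin_on_lin_map[OF bilin, symmetric]) (auto intro: g dest: TV_keys[OF x] TV_keys[OF y])
  finally show ?thesis .
qed

subsection \<open>Convolution powers\<close>

text \<open>Evaluated on the word \<open>w\<close>, \<open>aug_pow j\<close> is the \<open>j\<close>-th convolution power of the
  projection \<open>id - \<eta>\<epsilon>\<close> onto the augmentation ideal, and \<open>adams k\<close> is the \<open>k\<close>-th
  convolution power of the identity.\<close>

fun aug_pow :: "nat \<Rightarrow> 'i list \<Rightarrow> ('i, 'k) tens" where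
  "aug_pow 0 w = (if w = [] then word [] else 0)"
| "aug_pow (Suc j) w = (\<Sum>i<length w. m (aug_pow j (take i w)) (word (drop i w)))"

fun adams :: "nat \<Rightarrow> 'i list \<Rightarrow> ('i, 'k) tens" where
  "adams 0 w = (if w = [] then word [] else 0)"
| "adams (Suc k) w = (\<Sum>i\<le>length w. m (adams k (take i w)) (word (drop i w)))"

lemma aug_pow_TV: "w \<in> lists I \<Longrightarrow> aug_pow j w \<in> TV I"
  by (induction j arbitrary: w)
    (simp_all add: TV_word, intro TV_sum m_TV TV_word, auto simp: take_lists drop_lists)

lemma adams_TV: "w \<in> lists I \<Longrightarrow> adams k w \<in> TV I"
  by (induction k arbitrary: w)
    (simp_all add: TV_word, intro TV_sum m_TV TV_word, auto simp: take_lists drop_lists)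

lemma aug_pow_eq_0: "length w < j \<Longrightarrow> w \<in> lists I \<Longrightarrow> aug_pow j w = 0"
proof (induction j arbitrary: w)
  case (Suc j)
  have "aug_pow j (take i w) = 0" if "i < length w" for i
    using Suc that by (intro Suc.IH) (auto simp: take_lists)
  then show ?case
    using Suc.prems by (simp add: TV_word drop_lists)
qed simp

lemma adams_eq_binomial_sum:
  "w \<in> lists I \<Longrightarrow> adams k w = (\<Sum>j\<le>k. smult (of_nat (k choose j)) (aug_pow j w))"
proof (induction k arbitrary: w)
  case (Suc k)
  have tw: "take i w \<in> lists I" "drop i w \<in> lists I" for i
    using Suc.prems by (auto simp: take_lists drop_lists)
  have aug_pow_Suc: "(\<Sum>i\<le>length w. m (aug_pow j (take i w)) (word (drop i w)))
      = aug_pow j w + aug_pow (Suc j) w" for j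
    by (simp add: lessThan_Suc_atMost[symmetric] m_empty_word_right aug_pow_TV Suc.prems)
  have "adams (Suc k) w = (\<Sum>i\<le>length w.
      m (\<Sum>j\<le>k. smult (of_nat (k choose j)) (aug_pow j (take i w))) (word (drop i w)))"
    using Suc.IH tw by simp
  also have "\<dots> = (\<Sum>i\<le>length w. \<Sum>j\<le>k.
      smult (of_nat (k choose j)) (m (aug_pow j (take i w)) (word (drop i w))))"
    by (rule sum.cong[OF refl], subst lin_on_sum[OF lin_on_m_left])
      (auto simp: TV_word tw TV_smult aug_pow_TV lin_on_smult[OF lin_on_m_left])
  also have "\<dots> = (\<Sum>j\<le>k. smult (of_nat (k choose j)) (aug_pow j w + aug_pow (Suc j) w))"
    by (subst sum.swap) (simp add: smult_sum[symmetric] aug_pow_Suc)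
  also have "\<dots> = (\<Sum>j\<le>Suc k. smult (of_nat (Suc k choose j)) (aug_pow j w))"
    by (rule pascal_sum_smult)
  finally show ?case .
qed simp

lemma adams_eq_binomial_sum_upto:
  "w \<in> lists I \<Longrightarrow> length w \<le> N
   \<Longrightarrow> adams k w = (\<Sum>j\<le>N. smult (of_nat (k choose j)) (aug_pow j w))"
  unfolding adams_eq_binomial_sum
  by (rule sum_atMost_eq_if_vanish_above) (auto simp: aug_pow_eq_0 binomial_eq_0)

lemma lin_map_adams_0: "lin_map (adams 0) z = smult (lookup z []) (word [])"
proof (rule poly_mapping_eqI)
  fix v
  have "(\<lambda>a. lookup (adams 0 a) v) = (\<lambda>a. if a = [] then lookup (word []) v else 0)"
    by auto
  then show "lookup (lin_map (adams 0) z) v = lookup (smult (lookup z []) (word [])) v"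
    by (simp only: lookup_lin_map lin_form_indicator lookup_smult)
qed

lemma lin_map_adams_Suc:
  "lin_map (adams (Suc k)) z = lin_map (\<lambda>(p, q). m (lin_map (adams k) (word p)) (word q)) (Delta z)"
  unfolding Delta_as_lin_map lin_map_lin_map
  by (rule lin_map_cong) (simp add: deconc_def lin_map_sum lin_map_single lin_map_word)

text \<open>This is where the commutativity of \<open>m\<close> is used, through \<open>m_swap_middle\<close>.\<close>

lemma lin_map_adams_m:
  "x \<in> TV I \<Longrightarrow> y \<in> TV I \<Longrightarrow> lin_map (adams k) (m x y) = m (lin_map (adams k) x) (lin_map (adams k) y)"
proof (induction k arbitrary: x y)
  case 0
  show ?case
  proof (rule lin_map_m_of_words[OF adams_TV _ 0])
    fix a b :: "'i list" assume "a \<in> lists I" "b \<in> lists I"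
    then show "lin_map (adams 0) (m (word a) (word b)) = m (adams 0 a) (adams 0 b)"
      by (simp add: lin_map_adams_0 lookup_m_Nil TV_word lookup_word m_empty_word_left)
  qed
next
  case (Suc k)
  show ?case
  proof (rule lin_map_m_of_words[OF adams_TV _ Suc.prems])
    fix a b :: "'i list" assume a: "a \<in> lists I" and b: "b \<in> lists I"
    have ta: "take i a \<in> lists I" "drop i a \<in> lists I" for i
      using a by (auto simp: take_lists drop_lists)
    have tb: "take i b \<in> lists I" "drop i b \<in> lists I" for i
      using b by (auto simp: take_lists drop_lists)
    have "lin_map (adams (Suc k)) (m (word a) (word b)) = lin_map
        (\<lambda>(p, q). m (lin_map (adams k) (word p)) (word q)) (mult2 m (deconc a) (deconc b))"
      using Delta_mult a b by (simp add: lin_map_adams_Suc TV_word Delta_word)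
    also have "\<dots> = (\<Sum>i\<le>length a. \<Sum>j\<le>length b.
        m (lin_map (adams k) (m (word (take i a)) (word (take j b))))
          (m (word (drop i a)) (word (drop j b))))"
      unfolding mult2_deconc lin_map_sum
      by (intro sum.cong refl lin_map_m_tensor lin_on_lin_mapI adams_TV m_words_TV ta tb)
    also have "\<dots> = (\<Sum>i\<le>length a. \<Sum>j\<le>length b.
        m (m (adams k (take i a)) (word (drop i a))) (m (adams k (take j b)) (word (drop j b))))"
      by (intro sum.cong refl)
        (simp add: Suc.IH TV_word ta tb lin_map_word m_swap_middle adams_TV)
    also have "\<dots> = m (adams (Suc k) a) (adams (Suc k) b)"
      by (simp only: adams.simps, subst m_sum_sum) (auto intro!: m_TV TV_word adams_TV ta tb)
    finally show "lin_map (adams (Suc k)) (m (word a) (word b)) = m (adams (Suc k) a) (adams (Suc k) b)" .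
  qed
qed

subsection \<open>The Eulerian idempotent\<close>

text \<open>\<open>log_coeff j = (-1)^(j-1)/j\<close> for \<open>j > 0\<close>, so \<open>euler_idem\<close> is the logarithm of the
  identity in the convolution algebra; only the defining property as the coefficient of \<open>X\<close> in
  \<open>X choose j\<close> is used.\<close>

definition log_coeff :: "nat \<Rightarrow> 'k" where
  "log_coeff j = coeff (binom_poly j) 1"

definition euler_idem :: "'i list \<Rightarrow> ('i, 'k) tens" where
  "euler_idem w = (\<Sum>j\<le>length w. smult (log_coeff j) (aug_pow j w))"

lemma euler_idem_TV: "w \<in> lists I \<Longrightarrow> euler_idem w \<in> TV I"
  unfolding euler_idem_def by (intro TV_sum TV_smult aug_pow_TV)

lemma euler_idem_Nil: "euler_idem [] = 0"
  by (simp add: euler_idem_def log_coeff_def binom_poly_def)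

lemma euler_idem_letter: "x \<in> I \<Longrightarrow> euler_idem [x] = word [x]"
  by (simp add: euler_idem_def log_coeff_def binom_poly_def m_empty_word_left TV_word)

definition adams_poly :: "nat \<Rightarrow> ('i, 'k) tens \<Rightarrow> 'i list \<Rightarrow> 'k poly" where
  "adams_poly N z v = (\<Sum>j\<le>N. Polynomial.smult (lookup (lin_map (aug_pow j) z) v) (binom_poly j))"

lemma
  assumes z: "z \<in> TV I" and N: "\<And>w. w \<in> keys z \<Longrightarrow> length w \<le> N"
  shows poly_adams_poly: "poly (adams_poly N z v) (of_nat k) = lookup (lin_map (adams k) z) v"
    and coeff_adams_poly: "coeff (adams_poly N z v) 1 = lookup (lin_map euler_idem z) v"
proof -
  have "lin_map (adams k) z = lin_map (\<lambda>w. \<Sum>j\<le>N. smult (of_nat (k choose j)) (aug_pow j w)) z"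
    by (rule lin_map_cong) (simp add: adams_eq_binomial_sum_upto N TV_keys[OF z])
  then show "poly (adams_poly N z v) (of_nat k) = lookup (lin_map (adams k) z) v"
    by (simp add: adams_poly_def lin_map_fun_sum lin_map_fun_smult lookup_sum poly_sum
        poly_binom_poly mult.commute)
  have "lin_map euler_idem z = lin_map (\<lambda>w. \<Sum>j\<le>N. smult (log_coeff j) (aug_pow j w)) z"
    unfolding euler_idem_def
    by (rule lin_map_cong, rule sum.mono_neutral_left) (auto simp: aug_pow_eq_0 N TV_keys[OF z])
  then show "coeff (adams_poly N z v) 1 = lookup (lin_map euler_idem z) v"
    by (simp add: adams_poly_def lin_map_fun_sum lin_map_fun_smult lookup_sum coeff_sum
        log_coeff_def mult.commute)
qed

text \<open>Comparing the coefficients of \<open>k\<close> in \<open>adams k (a b) = adams k a \<cdot> adams k b\<close>: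
  every term on the right carries a product of two binomial polynomials without
  constant term.\<close>

lemma euler_idem_m_words:
  assumes a: "a \<in> lists I" and b: "b \<in> lists I" and "a \<noteq> []" "b \<noteq> []"
  shows "lin_map euler_idem (m (word a) (word b)) = 0"
proof (rule poly_mapping_eqI)
  fix v
  define z where "z = m (word a) (word b)"
  define N where "N = Max (insert 0 (length ` keys z))"
  have z: "z \<in> TV I"
    unfolding z_def by (rule m_words_TV[OF a b])
  have N: "length w \<le> N" if "w \<in> keys z" for w
    unfolding N_def using that by (intro Max_ge) auto
  define \<beta> where "\<beta> i l = lookup (m (aug_pow i a) (aug_pow l b)) v" for i l
  define q :: "'k poly" where
    "q = (\<Sum>i\<le>length a. \<Sum>l\<le>length b. Polynomial.smult (\<beta> i l) (binom_poly i * binom_poly l))"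
  have "poly (adams_poly N z v) (of_nat k) = poly q (of_nat k)" for k
  proof -
    have "lin_map (adams k) z = m (adams k a) (adams k b)"
      unfolding z_def by (simp add: lin_map_adams_m TV_word a b lin_map_word)
    also have "\<dots> = (\<Sum>i\<le>length a. \<Sum>l\<le>length b.
        smult (of_nat (k choose i) * of_nat (k choose l)) (m (aug_pow i a) (aug_pow l b)))"
      unfolding adams_eq_binomial_sum_upto[OF a order_refl] adams_eq_binomial_sum_upto[OF b order_refl]
      by (subst m_sum_sum) (auto intro: TV_smult simp: m_smult_smult aug_pow_TV a b)
    finally show ?thesis
      by (simp add: poly_adams_poly[OF z N] q_def \<beta>_def lookup_sum poly_sum poly_binom_poly
          mult.commute mult.left_commute)
  qed
  then have "adams_poly N z v = q"
    by (rule poly_eq_if_eq_on_nats)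
  moreover have "coeff q 1 = 0"
    unfolding q_def coeff_sum
  proof (intro sum.neutral ballI)
    fix i l
    have "\<beta> i l = 0" if "i = 0 \<or> l = 0"
      using that assms aug_pow_TV[OF a] aug_pow_TV[OF b] by (auto simp: \<beta>_def)
    then show "coeff (Polynomial.smult (\<beta> i l) (binom_poly i * binom_poly l)) 1 = 0"
      using coeff_binom_poly_mult_1[of i l, where 'k='k] by (cases "i = 0 \<or> l = 0") auto
  qed
  ultimately show "lookup (lin_map euler_idem (m (word a) (word b))) v = lookup 0 v"
    using coeff_adams_poly[OF z N, of v] by (simp add: z_def)
qed

subsection \<open>The isomorphism onto the shuffle algebra\<close>

text \<open>\<open>euler_coeff t\<close> is \<open>\<pi>(e(t))\<close>, the component in \<open>V\<close> of the Eulerian idempotent.\<close>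

definition euler_coeff :: "'i list \<Rightarrow> 'i \<Rightarrow> 'k" where
  "euler_coeff t l = lookup (euler_idem t) [l]"

lemma euler_coeff_Nil [simp]: "euler_coeff [] l = 0"
  by (simp add: euler_coeff_def euler_idem_Nil)

lemma euler_coeff_letter: "a \<in> I \<Longrightarrow> euler_coeff [a] l = (if a = l then 1 else 0)"
  by (simp add: euler_coeff_def euler_idem_letter lookup_word)

lemma euler_coeff_m_words:
  assumes "a \<in> lists I" "b \<in> lists I"
  shows "lookup (lin_map euler_idem (m (word a) (word b))) [l]
    = euler_coeff a l * lookup (word b) [] + lookup (word a) [] * euler_coeff b l"
  using assms euler_idem_m_words[OF assms]
  by (cases "a = []"; cases "b = []")
    (simp_all add: m_empty_word_left m_empty_word_right TV_word lin_map_word euler_coeff_def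
      lookup_word euler_idem_Nil)

text \<open>\<open>iso_word w\<close> is the sum of \<open>\<pi>(e(w\<^sub>1)) \<dots> \<pi>(e(w\<^sub>n))\<close> over all factorizations
  \<open>w = w\<^sub>1 \<dots> w\<^sub>n\<close> into nonempty words: the coalgebra map into the cofree coalgebra
  determined by \<open>\<pi> \<circ> e\<close>.\<close>

function iso_word :: "'i list \<Rightarrow> ('i, 'k) tens" where
  "iso_word w = (if w = [] then word []
     else (\<Sum>i\<in>{1..length w}. prefix_letters (euler_idem (take i w)) (iso_word (drop i w))))"
  by pat_completeness auto
termination by (relation "measure length") auto

declare iso_word.simps [simp del]

abbreviation iso :: "('i, 'k) tens \<Rightarrow> ('i, 'k) tens" where
  "iso \<equiv> lin_map iso_word"

lemma iso_word_Nil: "iso_word [] = word []"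
  by (simp add: iso_word.simps)

lemma lookup_iso_word_Nil: "lookup (iso_word w) [] = (if w = [] then 1 else 0)"
  by (subst iso_word.simps) (simp add: lookup_word lookup_sum)

lemma lookup_iso_word_Cons_pos: "lookup (iso_word w) (l # v)
  = (\<Sum>i\<in>{1..length w}. euler_coeff (take i w) l * lookup (iso_word (drop i w)) v)"
  by (subst iso_word.simps) (simp add: lookup_word lookup_sum lookup_prefix_letters_Cons euler_coeff_def)

lemma lookup_iso_word_Cons: "lookup (iso_word w) (l # v)
  = (\<Sum>i\<le>length w. euler_coeff (take i w) l * lookup (iso_word (drop i w)) v)"
proof -
  have "{..length w} = insert 0 {1..length w}"
    by auto
  then show ?thesis
    by (simp add: lookup_iso_word_Cons_pos)
qed

lemma iso_word_TV: "w \<in> lists I \<Longrightarrow> iso_word w \<in> TV I"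
proof (induction w rule: iso_word.induct)
  case (1 w)
  show ?case
  proof (cases "w = []")
    case False
    then show ?thesis
      using 1 by (subst iso_word.simps)
        (auto intro!: TV_sum TV_prefix_letters euler_idem_TV take_lists drop_lists 1)
  qed (simp add: iso_word_Nil TV_word)
qed

lemma lin_on_iso: "lin_on I iso"
  by (rule lin_on_lin_mapI) (rule iso_word_TV)

lemma residual_iso_word:
  "residual l (iso_word w) = (\<Sum>i\<le>length w. smult (euler_coeff (take i w) l) (iso_word (drop i w)))"
  by (rule poly_mapping_eqI) (simp add: lookup_residual lookup_sum lookup_iso_word_Cons)

lemma lookup_iso_m_words_Cons:
  assumes "a \<in> lists I" "b \<in> lists I"
  shows "lookup (iso (m (word a) (word b))) (l # v) = (\<Sum>i\<le>length a. \<Sum>j\<le>length b.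
      lookup (lin_map euler_idem (m (word (take i a)) (word (take j b)))) [l]
      * lookup (iso (m (word (drop i a)) (word (drop j b)))) v)"
proof -
  define G where "G = (\<lambda>(x, y). euler_coeff x l * lookup (iso_word y) v)"
  have "lookup (iso (m (word a) (word b))) (l # v) = lin_form G (Delta (m (word a) (word b)))"
    unfolding lin_form_Delta lookup_lin_map G_def by (simp add: lookup_iso_word_Cons)
  also have "\<dots> = lin_form G (mult2 m (deconc a) (deconc b))"
    using Delta_mult assms by (simp add: TV_word Delta_word)
  finally show ?thesis
    unfolding mult2_deconc lin_form_sum G_def
    by (simp add: lin_form_tensor lookup_lin_map euler_coeff_def)
qed

text \<open>Induction on the length of the coefficient word \<open>v\<close>: both sides obey the same
  recursion for the residual by the first letter, since \<open>\<pi> \<circ> e\<close> is a derivation.\<close>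

lemma lookup_iso_m_words:
  "a \<in> lists I \<Longrightarrow> b \<in> lists I
   \<Longrightarrow> lookup (iso (m (word a) (word b))) v = lookup (shuffle (iso_word a) (iso_word b)) v"
proof (induction v arbitrary: a b)
  case Nil
  have "lookup (iso (m (word a) (word b))) [] = lookup (m (word a) (word b)) []"
    by (simp add: lookup_lin_map lookup_iso_word_Nil lin_form_indicator)
  then show ?case
    using Nil by (simp add: lookup_m_Nil TV_word lookup_word lookup_shuffle_Nil lookup_iso_word_Nil)
next
  case (Cons l v)
  have ta: "take i a \<in> lists I" "drop i a \<in> lists I" for i
    using Cons.prems by (auto simp: take_lists drop_lists)
  have tb: "take i b \<in> lists I" "drop i b \<in> lists I" for i
    using Cons.prems by (auto simp: take_lists drop_lists)
  define S where "S x y = lookup (shuffle (iso_word x) (iso_word y)) v" for x y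
  have "lookup (iso (m (word a) (word b))) (l # v) = (\<Sum>i\<le>length a. \<Sum>j\<le>length b.
      (if take j b = [] then euler_coeff (take i a) l * S (drop i a) (drop j b) else 0) +
      (if take i a = [] then euler_coeff (take j b) l * S (drop i a) (drop j b) else 0))"
    unfolding lookup_iso_m_words_Cons[OF Cons.prems]
    by (intro sum.cong refl)
      (simp add: euler_coeff_m_words ta tb Cons.IH S_def lookup_word distrib_right)
  also have "\<dots> = (\<Sum>i\<le>length a. euler_coeff (take i a) l * S (drop i a) b)
                 + (\<Sum>j\<le>length b. euler_coeff (take j b) l * S a (drop j b))"
    unfolding sum_sum_if_take_eq_Nil by simp
  also have "\<dots> = lookup (shuffle (residual l (iso_word a)) (iso_word b)) v
                 + lookup (shuffle (iso_word a) (residual l (iso_word b))) v"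
    by (simp add: residual_iso_word shuffle_sum_left shuffle_sum_right shuffle_smult_left
        shuffle_smult_right lookup_sum S_def)
  finally show ?case
    by (simp add: lookup_shuffle_Cons)
qed

lemma iso_m: "x \<in> TV I \<Longrightarrow> y \<in> TV I \<Longrightarrow> iso (m x y) = shuffle (iso x) (iso y)"
proof -
  assume x: "x \<in> TV I" and y: "y \<in> TV I"
  have "iso (m x y) = lin_map (\<lambda>p. lin_map (\<lambda>q. iso (m (word p) (word q))) y) x"
    by (simp add: bilin_on_eq_lin_map[OF bilin x y] lin_map_lin_map)
  also have "\<dots> = lin_map (\<lambda>p. lin_map (\<lambda>q. shuffle (iso_word p) (iso_word q)) y) x"
    by (intro lin_map_cong poly_mapping_eqI lookup_iso_m_words) (auto dest: TV_keys[OF x] TV_keys[OF y])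
  also have "\<dots> = shuffle (iso x) (iso y)"
    by (simp add: shuffle_lin_map_left shuffle_lin_map_right) (rule lin_map_swap)
  finally show ?thesis .
qed

lemma lookup_iso_word_append: "lookup (iso_word w) (x @ y)
  = (\<Sum>k\<le>length w. lookup (iso_word (take k w)) x * lookup (iso_word (drop k w)) y)"
proof (induction x arbitrary: w)
  case Nil
  have "(\<Sum>k\<le>length w. lookup (iso_word (take k w)) [] * lookup (iso_word (drop k w)) y) =
        (\<Sum>k\<le>length w. if k = 0 then lookup (iso_word (drop k w)) y else 0)"
    by (rule sum.cong) (auto simp: lookup_iso_word_Nil)
  then show ?case by simp
next
  case (Cons l x)
  define F where "F i k = euler_coeff (take i w) l * lookup (iso_word (take (k - i) (drop i w))) x
    * lookup (iso_word (drop k w)) y" for i k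
  have "lookup (iso_word w) ((l # x) @ y)
      = (\<Sum>i\<in>{1..length w}. euler_coeff (take i w) l * lookup (iso_word (drop i w)) (x @ y))"
    by (simp add: lookup_iso_word_Cons_pos)
  also have "\<dots> = (\<Sum>i\<in>{1..length w}. \<Sum>k'\<le>length w - i. F i (i + k'))"
    by (intro sum.cong refl)
      (simp add: Cons.IH F_def sum_distrib_left mult.assoc drop_drop add.commute)
  also have "\<dots> = (\<Sum>k\<le>length w. \<Sum>i\<in>{1..k}. F i k)"
    by (rule sum_triangle_reindex[symmetric])
  also have "\<dots> = (\<Sum>k\<le>length w. lookup (iso_word (take k w)) (l # x) * lookup (iso_word (drop k w)) y)"
  proof (rule sum.cong[OF refl])
    fix k assume "k \<in> {..length w}"
    then have "lookup (iso_word (take k w)) (l # x)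
        = (\<Sum>i\<in>{1..k}. euler_coeff (take i w) l * lookup (iso_word (take (k - i) (drop i w))) x)"
      unfolding lookup_iso_word_Cons_pos by (intro sum.cong) (auto simp: min_def drop_take)
    then show "(\<Sum>i\<in>{1..k}. F i k)
        = lookup (iso_word (take k w)) (l # x) * lookup (iso_word (drop k w)) y"
      by (simp add: F_def sum_distrib_right)
  qed
  finally show ?case .
qed

lemma Delta_iso_word:
  "Delta (iso_word w) = (\<Sum>k\<le>length w. tensor (iso_word (take k w)) (iso_word (drop k w)))"
  by (rule poly_mapping_eqI) (auto simp: lookup_Delta lookup_sum lookup_tensor lookup_iso_word_append)

lemma Delta_iso: "Delta (iso x) = tmap iso iso (Delta x)"
proof -
  have "Delta (iso x) = lin_map (\<lambda>w. tmap iso iso (deconc w)) x"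
    unfolding Delta_as_lin_map lin_map_lin_map
    by (intro lin_map_cong)
      (simp add: tmap_as_lin_map deconc_def lin_map_sum lin_map_single lin_map_word
        Delta_iso_word[unfolded Delta_as_lin_map])
  then show ?thesis
    by (simp only: Delta_as_lin_map tmap_as_lin_map lin_map_lin_map)
qed

lemma eps_iso: "eps (iso x) = eps x"
  by (simp add: eps_def lookup_lin_map lookup_iso_word_Nil lin_form_indicator)

text \<open>\<open>iso\<close> is unitriangular with respect to the length of words, because
  \<open>\<pi> \<circ> e\<close> is the identity on letters.\<close>

lemma lookup_iso_word_short:
  "w \<in> lists I \<Longrightarrow> length w \<le> length v \<Longrightarrow> lookup (iso_word w) v = (if w = v then 1 else 0)"
proof (induction v arbitrary: w)
  case Nil
  then show ?case by (simp add: lookup_iso_word_Nil)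
next
  case (Cons l v)
  show ?case
  proof (cases w)
    case Nil
    then show ?thesis by (simp add: iso_word_Nil lookup_word)
  next
    case (Cons a w')
    have a: "a \<in> I" and w': "w' \<in> lists I"
      using Cons.prems Cons by auto
    have "euler_coeff (take i w) l * lookup (iso_word (drop i w)) v
        = (if i = 1 then (if a = l \<and> w' = v then 1 else 0) else 0)"
      if "i \<in> {1..length w}" for i
    proof (cases "i = 1")
      case True
      then show ?thesis
        using Cons Cons.prems by (simp add: Cons.IH[OF w'] euler_coeff_letter a)
    next
      case False
      then have "length (drop i w) < length v"
        using that Cons.prems by auto
      then have "drop i w \<noteq> v"
        by auto
      then show ?thesis
        using False Cons.IH[OF drop_lists[OF Cons.prems(1)]] \<open>length (drop i w) < length v\<close>
        by simp
    qed
    then have "lookup (iso_word w) (l # v)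
        = (\<Sum>i\<in>{1..length w}. if i = 1 then (if a = l \<and> w' = v then 1 else 0) else 0)"
      by (simp add: lookup_iso_word_Cons_pos)
    also have "\<dots> = (if w = l # v then 1 else 0)"
      using Cons by (cases v) (auto simp: sum.delta)
    finally show ?thesis .
  qed
qed

lemma lookup_iso_of_keys_short:
  assumes t: "t \<in> TV I" and short: "\<And>w. w \<in> keys t \<Longrightarrow> length w \<le> length v"
  shows "lookup (iso t) v = lookup t v"
proof -
  have "lookup (iso t) v = lin_form (\<lambda>w. if w = v then 1 else 0) t"
    unfolding lookup_lin_map
    by (rule lin_form_cong) (simp add: lookup_iso_word_short TV_keys[OF t] short)
  then show ?thesis
    by (simp add: lin_form_indicator)
qed

lemma inj_on_iso: "inj_on iso (TV I)"
proof
  fix x y assume x: "x \<in> TV I" and y: "y \<in> TV I" and eq: "iso x = iso y"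
  show "x = y"
  proof (rule ccontr)
    assume "x \<noteq> y"
    define d where "d = x - y"
    have d: "d \<in> TV I"
      unfolding d_def by (rule TV_diff[OF x y])
    have "d \<noteq> 0"
      using \<open>x \<noteq> y\<close> by (simp add: d_def)
    then obtain v where v: "v \<in> keys d" "\<forall>w\<in>keys d. length w \<le> length v"
      using Max_in[of "length ` keys d"] Max_ge[of "length ` keys d"] by fastforce
    have "lookup d v = lookup (iso d) v"
      using lookup_iso_of_keys_short[OF d] v(2) by simp
    also have "iso d = 0"
      by (simp add: d_def lin_map_diff eq)
    finally show False
      using v(1) by (simp add: in_keys_iff)
  qed
qed

lemma iso_surj_bounded:
  "y \<in> TV I \<Longrightarrow> (\<forall>v\<in>keys y. length v < N) \<Longrightarrow> y \<in> iso ` TV I"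
proof (induction N arbitrary: y)
  case 0
  then have "y = 0"
    by auto
  then show ?case
    using lin_on_zero[OF lin_on_iso] TV_zero by (metis image_eqI)
next
  case (Suc N)
  define t where "t = homogeneous_part N y"
  have lookup_t: "lookup t v = (if length v = N then lookup y v else 0)" for v
    by (simp add: t_def lookup_homogeneous_part)
  have t: "t \<in> TV I"
    unfolding t_def by (rule TV_homogeneous_part[OF Suc.prems(1)])
  have keys_t: "length w = N" if "w \<in> keys t" for w
    using that by (auto simp: in_keys_iff lookup_t split: if_splits)
  define r where "r = y - iso t"
  have r: "r \<in> TV I"
    unfolding r_def by (intro TV_diff Suc.prems(1) lin_on_TV[OF lin_on_iso t])
  have "length v < N" if v: "v \<in> keys r" for v
  proof (rule ccontr)
    assume "\<not> length v < N"
    then have "lookup (iso t) v = lookup t v"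
      using keys_t by (intro lookup_iso_of_keys_short[OF t]) fastforce
    moreover have "lookup y v = 0" if "length v \<noteq> N"
      using Suc.prems(2) \<open>\<not> length v < N\<close> that by (metis in_keys_iff less_Suc_eq)
    ultimately have "lookup r v = 0"
      by (simp add: r_def lookup_minus lookup_t)
    then show False
      using v by (simp add: in_keys_iff)
  qed
  then obtain x where x: "x \<in> TV I" "iso x = r"
    using Suc.IH[OF r] by blast
  then have "iso (x + t) = y"
    by (simp add: lin_map_add r_def)
  then show ?case
    using TV_add[OF x(1) t] by blast
qed

lemma bij_betw_iso: "bij_betw iso (TV I) (TV I)"
proof -
  have "y \<in> iso ` TV I" if "y \<in> TV I" for y
    using that by (intro iso_surj_bounded[of y "Suc (Max (length ` keys y))"])
      (auto intro: le_imp_less_Suc Max_ge)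
  then have "iso ` TV I = TV I"
    using lin_on_TV[OF lin_on_iso] by auto
  then show ?thesis
    using inj_on_iso by (simp add: bij_betw_def)
qed

lemma convolution_left_inverse_unique:
  fixes F G :: "'i list \<Rightarrow> ('i, 'k) tens"
  assumes eq: "\<And>w. w \<in> lists I \<Longrightarrow>
      (\<Sum>k\<le>length w. shuffle (F (take k w)) (iso_word (drop k w))) =
      (\<Sum>k\<le>length w. shuffle (G (take k w)) (iso_word (drop k w)))"
  shows "w \<in> lists I \<Longrightarrow> F w = G w"
proof (induction w rule: length_induct)
  case (1 w)
  have split_last: "(\<Sum>k\<le>length w. shuffle (H (take k w)) (iso_word (drop k w))) =
      (\<Sum>k<length w. shuffle (H (take k w)) (iso_word (drop k w))) + H w" for H
    by (simp add: lessThan_Suc_atMost[symmetric] iso_word_Nil shuffle_empty_word_right)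
  have "(\<Sum>k<length w. shuffle (F (take k w)) (iso_word (drop k w))) =
        (\<Sum>k<length w. shuffle (G (take k w)) (iso_word (drop k w)))"
    by (intro sum.cong refl, subst "1.IH") (auto simp: take_lists "1.prems")
  then show ?case
    using eq[OF "1.prems"] split_last[of F] split_last[of G] by simp
qed

lemma shuffle_antipode_convolution_iso_word:
  "(\<Sum>k\<le>length w. shuffle (shuffle_antipode (iso_word (take k w))) (iso_word (drop k w)))
   = smult (lookup (word w) []) (word [])"
proof -
  define K :: "('i, 'k) tens2 \<Rightarrow> ('i, 'k) tens"
    where "K = lin_map (\<lambda>(p, q). shuffle (shuffle_antipode (word p)) (word q))"
  have "(\<Sum>k\<le>length w. shuffle (shuffle_antipode (iso_word (take k w))) (iso_word (drop k w)))
      = K (Delta (iso_word w))"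
    by (simp add: K_def Delta_iso_word lin_map_sum lin_map_shuffle_antipode_tensor)
  also have "\<dots> = lin_map (\<lambda>z. K (deconc z)) (iso_word w)"
    by (simp add: K_def Delta_as_lin_map lin_map_lin_map)
  also have "\<dots> = lin_map (\<lambda>z. if z = [] then word [] else 0) (iso_word w)"
    by (rule lin_map_cong)
      (simp add: K_def deconc_def lin_map_sum lin_map_single shuffle_antipode_convolution_word)
  also have "\<dots> = smult (lookup (word w) []) (word [])"
  proof (rule poly_mapping_eqI)
    fix v
    have "lookup (lin_map (\<lambda>z. if z = [] then word [] else 0) (iso_word w)) v
        = lin_form (\<lambda>z. if z = [] then lookup (word []) v else 0) (iso_word w)"
      unfolding lookup_lin_map by (rule lin_form_cong) auto
    then show "lookup (lin_map (\<lambda>z. if z = [] then word [] else 0) (iso_word w)) v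
        = lookup (smult (lookup (word w) []) (word [])) v"
      by (simp add: lin_form_indicator lookup_iso_word_Nil lookup_word)
  qed
  finally show ?thesis .
qed

lemma antipode_convolution_iso_word:
  assumes S_lin: "lin_on I S"
    and antipode: "\<forall>x\<in>TV I. mult_ext m (tmap S id (Delta x)) = smult (eps x) u"
    and w: "w \<in> lists I"
  shows "(\<Sum>k\<le>length w. shuffle (iso (S (word (take k w)))) (iso_word (drop k w)))
    = smult (lookup (word w) []) (word [])"
proof -
  have tw: "take k w \<in> lists I" "drop k w \<in> lists I" for k
    using w by (auto simp: take_lists drop_lists)
  have S_word: "S (word (take k w)) \<in> TV I" for k
    by (rule lin_on_TV[OF S_lin TV_word[OF tw(1)]])
  have "mult_ext m (tmap S id (Delta (word w)))
      = (\<Sum>k\<le>length w. m (S (word (take k w))) (word (drop k w)))"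
    unfolding Delta_word deconc_def tmap_as_lin_map
    by (simp add: lin_map_sum lin_map_single mult_ext_sum mult_ext_tensor[OF bilin] S_word
        TV_word tw)
  then have convolution: "(\<Sum>k\<le>length w. m (S (word (take k w))) (word (drop k w)))
      = smult (lookup (word w) []) (word [])"
    using antipode[rule_format, OF TV_word[OF w]] by (simp add: eps_def unit_eq_empty_word)
  have "(\<Sum>k\<le>length w. shuffle (iso (S (word (take k w)))) (iso_word (drop k w)))
      = iso (\<Sum>k\<le>length w. m (S (word (take k w))) (word (drop k w)))"
    by (simp add: lin_map_sum iso_m S_word TV_word tw lin_map_word)
  then show ?thesis
    by (simp add: convolution lin_map_smult lin_map_word iso_word_Nil)
qed

lemma iso_antipode:
  assumes S_lin: "lin_on I S"
    and antipode: "\<forall>x\<in>TV I. mult_ext m (tmap S id (Delta x)) = smult (eps x) u"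
    and x: "x \<in> TV I"
  shows "iso (S x) = shuffle_antipode (iso x)"
proof -
  have "iso (S (word w)) = shuffle_antipode (iso_word w)" if "w \<in> lists I" for w
    using convolution_left_inverse_unique[of "\<lambda>w. iso (S (word w))" "\<lambda>w. shuffle_antipode (iso_word w)"]
      antipode_convolution_iso_word[OF S_lin antipode] shuffle_antipode_convolution_iso_word that
    by simp
  then have "iso (S x) = lin_map (\<lambda>w. shuffle_antipode (iso_word w)) x"
    unfolding lin_on_eq_lin_map[OF S_lin x] lin_map_lin_map
    by (intro lin_map_cong) (simp add: TV_keys[OF x])
  then show ?thesis
    by (simp add: shuffle_antipode_as_lin_map lin_map_lin_map)
qed

end

theorem mainTheorem17:
  fixes I :: "'i set"
    and m :: "('i, 'k::field_char_0) tens \<Rightarrow> ('i, 'k) tens \<Rightarrow> ('i, 'k) tens"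
    and u :: "('i, 'k) tens"
    and S :: "('i, 'k) tens \<Rightarrow> ('i, 'k) tens"
  assumes countI: "countable I"
    \<comment> \<open>m is a bilinear, associative, commutative product on T(V) with unit u\<close>
    and bilin: "bilin_on I m"
    and assoc: "\<forall>x\<in>TV I. \<forall>y\<in>TV I. \<forall>z\<in>TV I. m (m x y) z = m x (m y z)"
    and comm: "\<forall>x\<in>TV I. \<forall>y\<in>TV I. m x y = m y x"
    and unit_in: "u \<in> TV I"
    and unit: "\<forall>x\<in>TV I. m u x = x \<and> m x u = x"
    \<comment> \<open>(T(V), m, u, Delta, eps) is a bialgebra\<close>
    and Delta_mult: "\<forall>x\<in>TV I. \<forall>y\<in>TV I. Delta (m x y) = mult2 m (Delta x) (Delta y)"
    and Delta_unit: "Delta u = tensor u u"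
    and eps_mult: "\<forall>x\<in>TV I. \<forall>y\<in>TV I. eps (m x y) = eps x * eps y"
    and eps_unit: "eps u = 1"
    \<comment> \<open>S is its antipode\<close>
    and S_lin: "lin_on I S"
    and antipode: "\<forall>x\<in>TV I. mult_ext m (tmap S id (Delta x)) = smult (eps x) u
                          \<and> mult_ext m (tmap id S (Delta x)) = smult (eps x) u"
  shows "\<exists>\<phi>. lin_on I \<phi> \<and> bij_betw \<phi> (TV I) (TV I)
           \<and> \<phi> u = word []
           \<and> (\<forall>x\<in>TV I. \<forall>y\<in>TV I. \<phi> (m x y) = shuffle (\<phi> x) (\<phi> y))
           \<and> (\<forall>x\<in>TV I. Delta (\<phi> x) = tmap \<phi> \<phi> (Delta x))
           \<and> (\<forall>x\<in>TV I. eps (\<phi> x) = eps x)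
           \<and> (\<forall>x\<in>TV I. \<phi> (S x) = shuffle_antipode (\<phi> x))"
proof -
  interpret comm_tensor_bialgebra I m u
    using bilin assoc comm unit Delta_mult Delta_unit eps_mult eps_unit by unfold_locales
  have "\<forall>x\<in>TV I. mult_ext m (tmap S id (Delta x)) = smult (eps x) u"
    using antipode by blast
  then show ?thesis
    by (intro exI[of _ iso])
      (simp add: lin_on_iso bij_betw_iso unit_eq_empty_word lin_map_word iso_word_Nil iso_m
        Delta_iso eps_iso iso_antipode[OF S_lin])
qed

end
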